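(* Let $A(q)\in\mathrm{GL}_m(\mathbb C)$ (for $q>1$ close to $1$) and suppose there is $k\in\mathbb N^*$ such that $A(q)^{-1}(q-1)^k\to0$ as $q\to1$. Let $n\in\mathbb Z$. Then there exist $z\mapsto E_1(z,q)\in\mathrm{GL}_m(\mathbb C\{z\})$ and $F_2(z,q)\in\mathcal O^*_m$ such that $$\sigma_q\big(E_1(z,q)F_2(z,q)\big)=z^nA(q)E_1(z,q)F_2(z,q)=E_1(z,q)F_2(z,q)A(q)z^n.$$
   Context: $q>1$, $\sigma_qf(z)=f(qz)$, $\delta_q=(\sigma_q-\mathrm{Id})/(q-1)$. $\mathbb C\{z\}$: convergent power series. $\mathcal O^*_m$: the set of families $F(z,q)$ of invertible $m\times m$ matrices whose entries are, for $q$ close to $1$, meromorphic on $\mathbb C^*$, such that $(\delta_qF(z,q))F(z,q)^{-1}\to0$ and $F(z,q)\to\mathrm{Id}$ as $q\to1$, both uniformly on compact subsets of $\mathbb C^*$. *)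

theory Defs
  imports "HOL-Analysis.Analysis"
begin

text \<open>Meromorphic functions on an open set S: holomorphic off a set P of
  isolated points (closed and discrete in S), each point of P being at most a pole.
  Values at points of P are irrelevant (junk).\<close>
definition mero_on :: "complex set \<Rightarrow> (complex \<Rightarrow> complex) \<Rightarrow> bool" where
  "mero_on S f \<longleftrightarrow> (\<exists>P. P \<subseteq> S \<and> (\<forall>p\<in>S. \<not> p islimpt P) \<and> f holomorphic_on (S - P) \<and>
      (\<forall>p\<in>P. \<exists>N::nat. \<exists>c. ((\<lambda>z. (z - p) ^ N * f z) \<longlongrightarrow> c) (at p)))"

definition mat_analytic_on :: "(complex \<Rightarrow> complex^'m^'m) \<Rightarrow> complex set \<Rightarrow> bool" where
  "mat_analytic_on F S \<longleftrightarrow> (\<forall>i j. (\<lambda>z. F z $ i $ j) analytic_on S)"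

definition sigma_q :: "real \<Rightarrow> (complex \<Rightarrow> 'a) \<Rightarrow> complex \<Rightarrow> 'a" where
  "sigma_q q f z = f (complex_of_real q * z)"

definition delta_q :: "real \<Rightarrow> (complex \<Rightarrow> 'a::real_vector) \<Rightarrow> complex \<Rightarrow> 'a" where
  "delta_q q f z = (1 / (q - 1)) *\<^sub>R (sigma_q q f z - f z)"

definition O_star :: "(complex \<Rightarrow> real \<Rightarrow> complex^'m^'m) \<Rightarrow> bool" where
  "O_star F \<longleftrightarrow>
     (\<forall>\<^sub>F q in at_right 1.
        (\<forall>i j. mero_on (- {0}) (\<lambda>z. F z q $ i $ j)) \<and>
        (\<exists>z. z \<noteq> 0 \<and> mat_analytic_on (\<lambda>w. F w q) {z} \<and> det (F z q) \<noteq> 0)) \<and>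
     (\<forall>K. compact K \<and> K \<subseteq> - {0} \<longrightarrow> (\<forall>\<epsilon>>0. \<forall>\<^sub>F q in at_right 1.
        mat_analytic_on (\<lambda>w. F w q) K \<and>
        (\<forall>z\<in>K. norm (F z q - mat 1) < \<epsilon>))) \<and>
     (\<forall>K. compact K \<and> K \<subseteq> - {0} \<longrightarrow> (\<forall>\<epsilon>>0. \<forall>\<^sub>F q in at_right 1.
        (\<forall>z\<in>K. norm (delta_q q (\<lambda>w. F w q) z ** matrix_inv (F z q)) < \<epsilon>)))"

text \<open>z \<mapsto> E(z) lies in GL_m(C{z}): entries are convergent power series
  (holomorphic on a disc around 0) and E(0) is invertible.\<close>
definition GL_conv :: "(complex \<Rightarrow> complex^'m^'m) \<Rightarrow> bool" where
  "GL_conv E \<longleftrightarrow> (\<exists>r>0. \<forall>i j. (\<lambda>z. E z $ i $ j) holomorphic_on ball 0 r) \<and> invertible (E 0)"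

end

theory Submission
  imports Defs "HOL-Complex_Analysis.Conformal_Mappings"
begin

text \<open>
  The \<open>q\<close>-exponential \<open>e\<^sub>a(y) = \<Sum>k. c\<^sub>k y\<^sup>k\<close> with \<open>c\<^sub>k\<^sub>+\<^sub>1 = a c\<^sub>k / (q\<^sup>k\<^sup>+\<^sup>1 - 1)\<close> solves
  \<open>e\<^sub>a(q y) = (1 + a y) e\<^sub>a(y)\<close>. Put \<open>C = t A\<close> and \<open>D = C\<^sup>-\<^sup>1\<close>; then \<open>L(z) = e\<^sub>q(z C)\<close> and
  \<open>M(z) = e\<^sub>1(D / z)\<close> satisfy \<open>L(q z) M(q z) = q z C L(z) M(z)\<close>. Likewise
  \<open>\<theta>\<^sub>c = e\<^sub>q(c z) e\<^sub>1(1 / (c z))\<close> is a theta function, \<open>\<theta>\<^sub>c(q z) = q c z \<theta>\<^sub>c(z)\<close>, so with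
  \<open>u = (q s)\<^sup>n t\<close> the quotient \<open>\<theta>\<^sub>s\<^sup>n / \<theta>\<^sub>u\<close> trades the factor \<open>q t z\<close> for \<open>z\<^sup>n\<close>, and
  \<open>Y = (\<theta>\<^sub>s\<^sup>n / \<theta>\<^sub>u) L M\<close> solves \<open>Y(q z) = z\<^sup>n A Y(z)\<close>, with \<open>A\<close> commuting with \<open>Y\<close>.
  Grouping the factors holomorphic at \<open>0\<close> into \<open>E\<^sub>1\<close> and those holomorphic at \<open>\<infinity>\<close> into \<open>F\<^sub>2\<close>
  gives the factorisation. Since \<open>|c\<^sub>k| \<le> (a / (q - 1))\<^sup>k / k!\<close>, \<open>e\<^sub>1(y) - 1 = O(|y| / (q - 1))\<close>;
  choosing \<open>s, t, u\<close> of size at least \<open>(q - 1)\<^sup>-\<^sup>(\<^sup>k\<^sup>+\<^sup>2\<^sup>)\<close> makes the arguments \<open>1 / (c z)\<close> and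
  \<open>D / z\<close> of \<open>e\<^sub>1\<close> of size \<open>O((q - 1)\<^sup>2)\<close> on compacts of \<open>\<complex>\<^sup>*\<close>, whence \<open>F\<^sub>2 \<rightarrow> 1\<close> and
  \<open>\<delta>\<^sub>q F\<^sub>2 \<cdot> F\<^sub>2\<^sup>-\<^sup>1 = O(q - 1)\<close>.
\<close>

type_synonym 'm cmat = "complex^'m^'m"

lemma norm_vec_le_sum_norm_nth: "norm (x::'a::real_normed_vector^'n) \<le> (\<Sum>i\<in>UNIV. norm (x$i))"
  unfolding norm_vec_def by (rule L2_set_le_sum) simp

lemma norm_matrix_entry_le: "norm ((M::'a::real_normed_vector^'n^'k) $ i $ j) \<le> norm M"
  using Finite_Cartesian_Product.norm_nth_le[of "M$i" j] Finite_Cartesian_Product.norm_nth_le[of M i]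
  by linarith

lemma matrix_add_rdistrib: "((A::'a::semiring_1^'n^'m) + B) ** C = A ** C + B ** C"
  by (vector matrix_matrix_mult_def sum.distrib[symmetric] field_simps)

lemma matrix_diff_rdistrib: "((A::'a::ring_1^'n^'m) - B) ** C = A ** C - B ** C"
  by (vector matrix_matrix_mult_def sum_subtractf[symmetric] field_simps)

lemma matrix_mult_scaleR_right: "(A::'a::real_algebra_1^'n^'m) ** (k *\<^sub>R B) = k *\<^sub>R (A ** B)"
  by (simp add: matrix_scalar_ac scalar_matrix_assoc)

lemma matrix_mult_scaleR_left: "(k *\<^sub>R (A::'a::real_algebra_1^'n^'m)) ** B = k *\<^sub>R (A ** B)"
  by (simp add: scalar_matrix_assoc)

lemma norm_matrix_mult_le:
  fixes X Y :: "('m::finite) cmat"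
  shows "norm (X ** Y) \<le> real CARD('m) ^ 3 * norm X * norm Y"
proof -
  have entry: "norm ((X ** Y) $ i $ j) \<le> real CARD('m) * (norm X * norm Y)" for i j
  proof -
    have "norm ((X ** Y) $ i $ j) = norm (\<Sum>k\<in>UNIV. X$i$k * Y$k$j)"
      by (simp add: matrix_matrix_mult_def)
    also have "\<dots> \<le> (\<Sum>k\<in>(UNIV::'m set). norm X * norm Y)"
      by (intro order_trans[OF norm_sum] sum_mono)
         (simp add: norm_mult mult_mono norm_matrix_entry_le)
    finally show ?thesis by simp
  qed
  have "norm (X ** Y) \<le> (\<Sum>i\<in>(UNIV::'m set). \<Sum>j\<in>(UNIV::'m set). norm ((X ** Y) $ i $ j))"
    by (intro order_trans[OF norm_vec_le_sum_norm_nth] sum_mono norm_vec_le_sum_norm_nth)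
  also have "\<dots> \<le> (\<Sum>i\<in>(UNIV::'m set). \<Sum>j\<in>(UNIV::'m set). real CARD('m) * (norm X * norm Y))"
    by (intro sum_mono entry)
  also have "\<dots> = real CARD('m) ^ 3 * norm X * norm Y"
    by (simp add: power3_eq_cube)
  finally show ?thesis .
qed

lemma norm_matrix_vector_mult_le:
  fixes X :: "('m::finite) cmat" and x :: "complex^'m"
  shows "norm (X *v x) \<le> real CARD('m) ^ 2 * norm X * norm x"
proof -
  have entry: "norm ((X *v x) $ i) \<le> real CARD('m) * (norm X * norm x)" for i
  proof -
    have "norm ((X *v x) $ i) = norm (\<Sum>k\<in>UNIV. X$i$k * x$k)"
      by (simp add: matrix_vector_mult_def)
    also have "\<dots> \<le> (\<Sum>k\<in>(UNIV::'m set). norm X * norm x)"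
      by (intro order_trans[OF norm_sum] sum_mono)
         (simp add: norm_mult mult_mono norm_matrix_entry_le Finite_Cartesian_Product.norm_nth_le)
    finally show ?thesis by simp
  qed
  have "norm (X *v x) \<le> (\<Sum>i\<in>(UNIV::'m set). real CARD('m) * (norm X * norm x))"
    by (intro order_trans[OF norm_vec_le_sum_norm_nth] sum_mono entry)
  also have "\<dots> = real CARD('m) ^ 2 * norm X * norm x"
    by (simp add: power2_eq_square)
  finally show ?thesis .
qed

lemma card_cube_ge_1: "real CARD('m::finite) ^ 3 \<ge> 1"
  using finite_UNIV_card_ge_0[where 'a='m] by simp

lemma bounded_linear_matrix_mult_left: "bounded_linear (\<lambda>Y::'m cmat. X ** Y)"
  for X :: "('m::finite) cmat"
proof (rule bounded_linear_intro[where K = "real CARD('m) ^ 3 * norm X"])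
  show "norm (X ** Y) \<le> norm Y * (real CARD('m) ^ 3 * norm X)" for Y :: "'m cmat"
    using norm_matrix_mult_le[of X Y] by (simp add: mult_ac)
qed (simp_all add: matrix_add_ldistrib matrix_mult_scaleR_right)

lemma bounded_linear_matrix_mult_right: "bounded_linear (\<lambda>Y::'m cmat. Y ** X)"
  for X :: "('m::finite) cmat"
proof (rule bounded_linear_intro[where K = "real CARD('m) ^ 3 * norm X"])
  show "norm (Y ** X) \<le> norm Y * (real CARD('m) ^ 3 * norm X)" for Y :: "'m cmat"
    using norm_matrix_mult_le[of Y X] by (simp add: mult_ac)
qed (simp_all add: matrix_add_rdistrib matrix_mult_scaleR_left)

lemma bounded_linear_matrix_entry: "bounded_linear (\<lambda>Y::('m::finite) cmat. Y $ i $ j)"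
  using bounded_linear_compose[OF bounded_linear_vec_nth[of j] bounded_linear_vec_nth[of i]] by simp

lemma invertible_matrix_inv:
  assumes "invertible (X::'a::semiring_1^'n^'n)"
  shows "X ** matrix_inv X = mat 1 \<and> matrix_inv X ** X = mat 1"
  using assms unfolding invertible_def matrix_inv_def by (rule someI_ex)

lemma invertible_near_mat_1:
  fixes X :: "'m::finite cmat"
  assumes "real CARD('m) ^ 2 * norm (X - mat 1) < 1"
  shows "invertible X"
proof -
  have "inj ((*v) X)"
  proof (rule injI)
    fix x y :: "complex^'m"
    assume "X *v x = X *v y"
    then have "x - y = (mat 1 - X) *v (x - y)"
      by (simp add: matrix_vector_mult_diff_distrib matrix_vector_mult_diff_rdistrib)
    then have "norm (x - y) \<le> (real CARD('m) ^ 2 * norm (X - mat 1)) * norm (x - y)"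
      by (metis norm_matrix_vector_mult_le norm_minus_commute)
    with assms have "norm (x - y) = 0"
      by (metis mult_le_cancel_right1 norm_ge_zero not_less order.order_iff_strict)
    then show "x = y" by simp
  qed
  then have "det (matrix ((*v) X)) \<noteq> 0"
    using det_nz_iff_inj_gen[OF matrix_vector_mul_linear_gen[of X]] by simp
  then show ?thesis using invertible_det_nz by (metis matrix_of_matrix_vector_mul)
qed

lemma norm_right_inverse_near_mat_1:
  fixes B Y :: "'m::finite cmat"
  assumes inv: "(mat 1 + B) ** Y = mat 1" and small: "real CARD('m) ^ 3 * norm B \<le> 1/2"
  shows "norm Y \<le> 2 * norm (mat 1 :: 'm cmat)"
proof -
  have "Y = mat 1 - B ** Y" using inv by (simp add: matrix_add_rdistrib algebra_simps)
  then have "norm Y \<le> norm (mat 1 :: 'm cmat) + norm (B ** Y)"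
    by (metis norm_triangle_ineq4)
  also have "\<dots> \<le> norm (mat 1 :: 'm cmat) + real CARD('m) ^ 3 * norm B * norm Y"
    using norm_matrix_mult_le[of B Y] by simp
  also have "\<dots> \<le> norm (mat 1 :: 'm cmat) + 1/2 * norm Y"
    by (intro add_left_mono mult_right_mono small) simp
  finally show ?thesis by simp
qed

fun matpow :: "'a::semiring_1^'n^'n \<Rightarrow> nat \<Rightarrow> 'a^'n^'n" where
  "matpow B 0 = mat 1"
| "matpow B (Suc k) = B ** matpow B k"

text \<open>\<open>*\<^sub>R\<close> only allows real scalars.\<close>
definition cmat_scale :: "complex \<Rightarrow> ('m::finite) cmat \<Rightarrow> 'm cmat" where
  "cmat_scale c M = (\<chi> i j. c * M$i$j)"

lemma cmat_scale_entry [simp]: "cmat_scale c M $ i $ j = c * M $ i $ j"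
  by (simp add: cmat_scale_def)

lemma cmat_scale_1 [simp]: "cmat_scale 1 X = X"
  by (simp add: vec_eq_iff)

lemma cmat_scale_0_left [simp]: "cmat_scale 0 X = 0"
  by (simp add: vec_eq_iff)

lemma cmat_scale_mult_left: "cmat_scale c X ** Y = cmat_scale c (X ** Y)"
  by (simp add: vec_eq_iff matrix_matrix_mult_def sum_distrib_left mult_ac)

lemma cmat_scale_mult_right: "X ** cmat_scale c Y = cmat_scale c (X ** Y)"
  by (simp add: vec_eq_iff matrix_matrix_mult_def sum_distrib_left mult_ac)

lemma cmat_scale_cmat_scale: "cmat_scale a (cmat_scale b X) = cmat_scale (a * b) X"
  by (simp add: vec_eq_iff)

lemma cmat_scale_mult: "cmat_scale a X ** cmat_scale b Y = cmat_scale (a * b) (X ** Y)"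
  by (simp add: cmat_scale_mult_left cmat_scale_mult_right cmat_scale_cmat_scale mult.commute)

lemma cmat_scale_of_real: "cmat_scale (of_real r) X = r *\<^sub>R X"
  by (simp add: vec_eq_iff) (simp add: scaleR_conv_of_real)

lemma cmat_scale_diff: "cmat_scale c (X - Y) = cmat_scale c X - cmat_scale c Y"
  by (simp add: vec_eq_iff algebra_simps)

lemma cmat_scale_mat_1: "cmat_scale c (mat 1) = mat c"
  by (simp add: vec_eq_iff mat_def)

lemma mat_mult_eq_cmat_scale: "mat c ** Y = cmat_scale c (Y::'m::finite cmat)"
  by (metis matrix_mul_lid cmat_scale_mat_1 cmat_scale_mult_left)

lemma mult_mat_eq_cmat_scale: "Y ** mat c = cmat_scale c (Y::'m::finite cmat)"
  by (metis matrix_mul_rid cmat_scale_mat_1 cmat_scale_mult_right)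

lemma norm_cmat_scale: "norm (cmat_scale c X) = norm c * norm X"
proof -
  have row: "norm (cmat_scale c X $ i) = norm c * norm (X $ i)" for i
  proof -
    have "norm (cmat_scale c X $ i) = L2_set (\<lambda>j. norm c * norm (X$i$j)) UNIV"
      by (simp add: norm_vec_def norm_mult)
    then show ?thesis by (simp add: norm_vec_def L2_set_right_distrib)
  qed
  have "norm (cmat_scale c X) = L2_set (\<lambda>i. norm c * norm (X$i)) UNIV"
    by (simp add: norm_vec_def[of "cmat_scale c X"] row)
  then show ?thesis by (simp add: norm_vec_def[of X] L2_set_right_distrib)
qed

lemma norm_cmat_scale_minus_mat_1:
  fixes M :: "'m::finite cmat"
  shows "norm (cmat_scale g M - mat 1)
    \<le> norm g * norm (M - mat 1) + norm (g - 1) * norm (mat 1 :: 'm cmat)"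
proof -
  have "cmat_scale g M - mat 1 = cmat_scale g (M - mat 1) + cmat_scale (g - 1) (mat 1)"
    by (simp add: vec_eq_iff mat_def algebra_simps)
  then show ?thesis by (metis norm_cmat_scale norm_triangle_ineq)
qed

lemma matpow_cmat_scale: "matpow (cmat_scale z C) k = cmat_scale (z ^ k) (matpow C k)"
  by (induction k) (simp_all add: cmat_scale_mult_left cmat_scale_mult_right cmat_scale_cmat_scale mult.commute)

lemma matpow_scaleR: "matpow (r *\<^sub>R (C::'m::finite cmat)) k = (r ^ k) *\<^sub>R (matpow C k)"
  using matpow_cmat_scale[of "of_real r" C k] by (simp add: cmat_scale_of_real flip: of_real_power)

lemma matpow_commute:
  fixes N B :: "'a::semiring_1^'n^'n"
  assumes "N ** B = B ** N"
  shows "N ** matpow B k = matpow B k ** N"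
proof (induction k)
  case (Suc k)
  have "N ** matpow B (Suc k) = B ** (N ** matpow B k)"
    by (simp add: assms matrix_mul_assoc)
  then show ?case by (simp add: Suc matrix_mul_assoc)
qed simp

lemma norm_matpow_le:
  "norm (matpow (B::'m::finite cmat) k) \<le> norm (mat 1 :: 'm cmat) * (real CARD('m) ^ 3 * norm B) ^ k"
proof (induction k)
  case (Suc k)
  have "norm (matpow B (Suc k)) \<le> real CARD('m) ^ 3 * norm B * norm (matpow B k)"
    by (simp add: norm_matrix_mult_le)
  also have "\<dots> \<le> real CARD('m) ^ 3 * norm B * (norm (mat 1 :: 'm cmat) * (real CARD('m) ^ 3 * norm B) ^ k)"
    by (intro mult_left_mono Suc) simp
  finally show ?case by (simp add: mult_ac)
qed simp

section \<open>The \<open>q\<close>-exponential series\<close>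

text \<open>Coefficients of the \<open>q\<close>-exponential series \<open>e(y) = \<Sum>k. c\<^sub>k y\<^sup>k\<close> characterised by
  \<open>e(q y) = (1 + a y) e(y)\<close>.\<close>
fun qexp_coeff :: "real \<Rightarrow> real \<Rightarrow> nat \<Rightarrow> real" where
  "qexp_coeff q a 0 = 1"
| "qexp_coeff q a (Suc k) = a * qexp_coeff q a k / (q ^ Suc k - 1)"

lemma qexp_coeff_recurrence:
  assumes "q > 1"
  shows "qexp_coeff q a (Suc k) * q ^ Suc k - qexp_coeff q a (Suc k) = a * qexp_coeff q a k"
proof -
  have "q ^ Suc k - 1 \<noteq> 0" using one_less_power[OF assms, of "Suc k"] by simp
  then have "qexp_coeff q a (Suc k) * (q ^ Suc k - 1) = a * qexp_coeff q a k"
    by (simp del: power_Suc)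
  then show ?thesis by (metis mult.right_neutral right_diff_distrib)
qed

lemma qexp_coeff_bound:
  assumes q: "q > 1" and a: "a \<ge> 0"
  shows "0 \<le> qexp_coeff q a k \<and> qexp_coeff q a k \<le> (a / (q - 1)) ^ k / fact k"
proof (induction k)
  case (Suc k)
  have "1 + real (Suc k) * (q - 1) \<le> (1 + (q - 1)) ^ Suc k"
    by (rule Bernoulli_inequality) (use q in simp)
  then have lin: "real (Suc k) * (q - 1) \<le> q ^ Suc k - 1" by simp
  have pos: "real (Suc k) * (q - 1) > 0" using q by simp
  have "qexp_coeff q a (Suc k) \<le> a * qexp_coeff q a k / (real (Suc k) * (q - 1))"
    unfolding qexp_coeff.simps
    by (intro divide_left_mono lin mult_nonneg_nonneg a) (use Suc pos lin in auto)
  also have "\<dots> \<le> a * ((a / (q - 1)) ^ k / fact k) / (real (Suc k) * (q - 1))"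
    by (intro divide_right_mono mult_left_mono) (use Suc pos a in auto)
  also have "\<dots> = (a / (q - 1)) ^ Suc k / fact (Suc k)"
    using q by (simp add: field_simps)
  finally show ?case using Suc pos lin a by simp
qed simp

text \<open>The series \<open>\<Sum>k. c\<^sub>k P\<^sub>k\<close> for a sequence \<open>P\<close> of at most geometric growth; \<open>P\<^sub>k = y\<^sup>k\<close> and
  \<open>P\<^sub>k = B\<^sup>k\<close> give the scalar and the matrix \<open>q\<close>-exponential.\<close>
definition qexp_series :: "real \<Rightarrow> real \<Rightarrow> (nat \<Rightarrow> 'a::real_normed_vector) \<Rightarrow> 'a" where
  "qexp_series q a P = (\<Sum>k. qexp_coeff q a k *\<^sub>R P k)"

lemma norm_qexp_series_term_le:
  assumes q: "q > 1" and a: "a \<ge> 0" and P: "\<And>k. norm (P k) \<le> N * R ^ k"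
  shows "norm (qexp_coeff q a k *\<^sub>R P k) \<le> N * (a * R / (q - 1)) ^ k / fact k"
proof -
  have c: "0 \<le> qexp_coeff q a k" "qexp_coeff q a k \<le> (a / (q - 1)) ^ k / fact k"
    using qexp_coeff_bound[OF q a] by auto
  have "norm (qexp_coeff q a k *\<^sub>R P k) = qexp_coeff q a k * norm (P k)" using c by simp
  also have "\<dots> \<le> (a / (q - 1)) ^ k / fact k * (N * R ^ k)"
    by (intro mult_mono c P) (use q a in auto)
  also have "\<dots> = N * (a * R / (q - 1)) ^ k / fact k"
    by (simp add: power_mult_distrib power_divide)
  finally show ?thesis .
qed

lemma summable_norm_qexp_series:
  assumes q: "q > 1" and a: "a \<ge> 0" and P: "\<And>k. norm (P k) \<le> N * R ^ k"
  shows "summable (\<lambda>k. norm (qexp_coeff q a k *\<^sub>R P k))"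
proof (rule summable_comparison_test')
  let ?x = "a * R / (q - 1)"
  show "summable (\<lambda>k. N * ?x ^ k / fact k)"
    using summable_mult[OF summable_exp_generic[of ?x], of N] by (simp add: divide_inverse mult_ac)
  show "norm (norm (qexp_coeff q a k *\<^sub>R P k)) \<le> N * ?x ^ k / fact k" for k
    using norm_qexp_series_term_le[OF q a P] by simp
qed

lemma summable_qexp_series:
  fixes P :: "nat \<Rightarrow> 'a::banach"
  assumes q: "q > 1" and a: "a \<ge> 0" and P: "\<And>k. norm (P k) \<le> N * R ^ k"
  shows "summable (\<lambda>k. qexp_coeff q a k *\<^sub>R P k)"
  by (rule summable_norm_cancel[OF summable_norm_qexp_series[OF q a P]])

lemma qexp_series_eq_first:
  assumes "\<And>k. k > 0 \<Longrightarrow> P k = 0"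
  shows "qexp_series q a P = P 0"
proof -
  have "(\<lambda>k. qexp_coeff q a k *\<^sub>R P k) sums (\<Sum>k<1. qexp_coeff q a k *\<^sub>R P k)"
    by (rule sums_finite) (use assms in auto)
  then show ?thesis unfolding qexp_series_def by (simp add: sums_iff)
qed

text \<open>If \<open>P\<^sub>k\<^sub>+\<^sub>1 = L P\<^sub>k\<close> then \<open>e(q\<^sup>k P\<^sub>k) = e(P) + a L(e(P))\<close>: the recurrence
  \<open>c\<^sub>k\<^sub>+\<^sub>1 (q\<^sup>k\<^sup>+\<^sup>1 - 1) = a c\<^sub>k\<close> telescopes termwise.\<close>
lemma qexp_series_functional_eq:
  fixes P :: "nat \<Rightarrow> 'a::banach"
  assumes q: "q > 1" and a: "a \<ge> 0" and L: "bounded_linear L"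
    and P_Suc: "\<And>k. P (Suc k) = L (P k)" and P: "\<And>k. norm (P k) \<le> N * R ^ k"
  shows "qexp_series q a (\<lambda>k. q ^ k *\<^sub>R P k) = qexp_series q a P + a *\<^sub>R L (qexp_series q a P)"
proof -
  define f where "f k = qexp_coeff q a k *\<^sub>R P k" for k
  define g where "g k = qexp_coeff q a k *\<^sub>R (q ^ k *\<^sub>R P k)" for k
  have sf: "summable f" unfolding f_def by (rule summable_qexp_series[OF q a P])
  have Pq: "norm (q ^ k *\<^sub>R P k) \<le> N * (q * R) ^ k" for k
    using mult_left_mono[OF P[of k], of "q ^ k"] q by (simp add: power_mult_distrib mult_ac)
  have sg: "summable g" unfolding g_def by (rule summable_qexp_series[OF q a Pq])
  have diff_Suc: "g (Suc j) - f (Suc j) = a *\<^sub>R L (f j)" for j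
  proof -
    have "g (Suc j) - f (Suc j)
        = (qexp_coeff q a (Suc j) * q ^ Suc j - qexp_coeff q a (Suc j)) *\<^sub>R P (Suc j)"
      by (simp add: f_def g_def scaleR_diff_left del: qexp_coeff.simps power_Suc)
    also have "\<dots> = (a * qexp_coeff q a j) *\<^sub>R P (Suc j)"
      by (simp only: qexp_coeff_recurrence[OF q])
    finally show ?thesis
      by (simp add: f_def P_Suc linear_scale[OF bounded_linear.linear[OF L]])
  qed
  have sd: "summable (\<lambda>k. g k - f k)" using summable_diff[OF sg sf] .
  have e: "qexp_series q a P = suminf f" unfolding qexp_series_def f_def ..
  have "qexp_series q a (\<lambda>k. q ^ k *\<^sub>R P k) - qexp_series q a P = (\<Sum>k. g k - f k)"
    unfolding qexp_series_def f_def[symmetric] g_def[symmetric] by (rule suminf_diff[OF sg sf])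
  also have "\<dots> = (\<Sum>k. g (Suc k) - f (Suc k))"
    using suminf_split_head[OF sd] by (simp add: f_def g_def)
  also have "\<dots> = (\<Sum>k. a *\<^sub>R L (f k))" by (simp add: diff_Suc)
  also have "\<dots> = a *\<^sub>R L (suminf f)"
    using bounded_linear.suminf[OF bounded_linear_compose[OF bounded_linear_scaleR_right L] sf]
    by simp
  finally show ?thesis unfolding e by (simp add: algebra_simps)
qed

lemma qexp_series_minus_first_le:
  fixes P :: "nat \<Rightarrow> 'a::banach"
  assumes q: "q > 1" and a: "a \<ge> 0" and R: "R \<ge> 0" and P: "\<And>k. norm (P k) \<le> N * R ^ k"
    and small: "a * R / (q - 1) \<le> 1/2"
  shows "norm (qexp_series q a P - P 0) \<le> 2 * N * (a * R / (q - 1))"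
proof -
  define x where "x = a * R / (q - 1)"
  define f where "f k = qexp_coeff q a k *\<^sub>R P k" for k
  have N0: "N \<ge> 0" using order_trans[OF norm_ge_zero P[of 0]] by simp
  have x0: "0 \<le> x" and x1: "x \<le> 1/2" using q a R small by (simp_all add: x_def)
  have snf: "summable (\<lambda>k. norm (f (Suc k)))"
    using summable_norm_qexp_series[OF q a P] by (subst summable_Suc_iff) (simp add: f_def)
  have geom: "summable (\<lambda>k. N * x ^ Suc k)"
    using x0 x1 by (intro summable_mult) (simp add: summable_Suc_iff)
  have f_le: "norm (f k) \<le> N * x ^ k" for k
  proof -
    have "norm (f k) \<le> N * x ^ k / fact k"
      unfolding f_def x_def by (rule norm_qexp_series_term_le[OF q a P])
    also have "\<dots> \<le> N * x ^ k / 1"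
      by (intro divide_left_mono fact_ge_1) (use N0 x0 in auto)
    finally show ?thesis by simp
  qed
  have "qexp_series q a P - P 0 = (\<Sum>k. f (Suc k))"
    using suminf_split_head[OF summable_qexp_series[OF q a P]]
    by (simp add: qexp_series_def f_def)
  then have "norm (qexp_series q a P - P 0) \<le> (\<Sum>k. norm (f (Suc k)))"
    using summable_norm[OF snf] by simp
  also have "\<dots> \<le> (\<Sum>k. N * x ^ Suc k)"
    by (intro suminf_le f_le snf geom)
  also have "\<dots> = N * x / (1 - x)"
    using suminf_mult[of "\<lambda>k. x ^ k" "N * x"] x0 x1 by (simp add: suminf_geometric mult_ac)
  also have "\<dots> \<le> N * x / (1/2)"
    by (rule divide_left_mono) (use N0 x0 x1 in auto)
  finally show ?thesis by (simp add: x_def mult_ac)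
qed

lemma holomorphic_on_power_series:
  assumes "\<And>y. summable (\<lambda>n. c n * y ^ n)"
  shows "(\<lambda>y::complex. \<Sum>n. c n * y ^ n) holomorphic_on S"
proof -
  have "(\<lambda>y::complex. \<Sum>n. c n * y ^ n) holomorphic_on UNIV"
    unfolding holomorphic_on_open[OF open_UNIV]
    using termdiffs_strong_converges_everywhere[OF assms] by blast
  then show ?thesis by (rule holomorphic_on_subset) simp
qed

definition qexp :: "real \<Rightarrow> real \<Rightarrow> complex \<Rightarrow> complex" where
  "qexp q a y = qexp_series q a (\<lambda>k. y ^ k)"

lemma norm_power_le_geometric: "norm (y ^ k) \<le> 1 * norm y ^ k" for y :: complex
  by (simp add: norm_power)

lemma qexp_functional_eq:
  assumes q: "q > 1" and a: "a \<ge> 0"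
  shows "qexp q a (of_real q * y) = (1 + of_real a * y) * qexp q a y"
proof -
  have "(of_real q * y) ^ k = q ^ k *\<^sub>R y ^ k" for k
    by (simp add: power_mult_distrib scaleR_conv_of_real)
  then have "qexp q a (of_real q * y) = qexp_series q a (\<lambda>k. q ^ k *\<^sub>R y ^ k)"
    by (simp add: qexp_def)
  also have "\<dots> = qexp q a y + a *\<^sub>R (y * qexp q a y)"
    unfolding qexp_def
    by (rule qexp_series_functional_eq[OF q a bounded_linear_mult_right _ norm_power_le_geometric])
       simp
  finally show ?thesis by (simp add: scaleR_conv_of_real algebra_simps)
qed

lemma qexp_at_0 [simp]: "qexp q a 0 = 1"
  unfolding qexp_def by (subst qexp_series_eq_first) simp_all

lemma norm_qexp_minus_1_le:
  assumes q: "q > 1" and a: "a \<ge> 0" and small: "a * norm y / (q - 1) \<le> 1/2"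
  shows "norm (qexp q a y - 1) \<le> 2 * (a * norm y / (q - 1))"
  using qexp_series_minus_first_le[OF q a norm_ge_zero norm_power_le_geometric small]
  by (simp add: qexp_def)

lemma qexp_nonzero:
  assumes q: "q > 1" and a: "a \<ge> 0" and small: "a * norm y / (q - 1) < 1/2"
  shows "qexp q a y \<noteq> 0"
proof
  assume "qexp q a y = 0"
  then have "norm (qexp q a y - 1) = 1" by simp
  moreover have "norm (qexp q a y - 1) \<le> 2 * (a * norm y / (q - 1))"
    using norm_qexp_minus_1_le[OF q a] small by simp
  ultimately show False using small by simp
qed

lemma holomorphic_qexp:
  assumes q: "q > 1" and a: "a \<ge> 0"
  shows "qexp q a holomorphic_on S"
proof -
  have "qexp q a = (\<lambda>y. \<Sum>k. of_real (qexp_coeff q a k) * y ^ k)"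
    by (simp add: fun_eq_iff qexp_def qexp_series_def scaleR_conv_of_real)
  moreover have "summable (\<lambda>k. of_real (qexp_coeff q a k) * y ^ k)" for y :: complex
    using summable_qexp_series[OF q a norm_power_le_geometric] by (simp add: scaleR_conv_of_real)
  ultimately show ?thesis by (simp add: holomorphic_on_power_series)
qed

definition mat_qexp :: "real \<Rightarrow> real \<Rightarrow> ('m::finite) cmat \<Rightarrow> 'm cmat" where
  "mat_qexp q a B = qexp_series q a (matpow B)"

lemma summable_mat_qexp:
  assumes q: "q > 1" and a: "a \<ge> 0"
  shows "summable (\<lambda>k. qexp_coeff q a k *\<^sub>R matpow (B::'m::finite cmat) k)"
  by (rule summable_qexp_series[OF q a norm_matpow_le])

lemma mat_qexp_functional_eq:
  assumes q: "q > 1" and a: "a \<ge> 0"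
  shows "mat_qexp q a (q *\<^sub>R B) = mat_qexp q a B + a *\<^sub>R (B ** mat_qexp q a (B::'m::finite cmat))"
  unfolding mat_qexp_def matpow_scaleR
  by (rule qexp_series_functional_eq[OF q a bounded_linear_matrix_mult_left _ norm_matpow_le]) simp

lemma mat_qexp_commute:
  assumes q: "q > 1" and a: "a \<ge> 0" and comm: "N ** B = B ** N"
  shows "N ** mat_qexp q a B = mat_qexp q a B ** (N::'m::finite cmat)"
proof -
  note s = summable_mat_qexp[OF q a, of B]
  have "N ** mat_qexp q a B = (\<Sum>k. N ** (qexp_coeff q a k *\<^sub>R matpow B k))"
    unfolding mat_qexp_def qexp_series_def
    by (rule bounded_linear.suminf[OF bounded_linear_matrix_mult_left s])
  also have "\<dots> = (\<Sum>k. (qexp_coeff q a k *\<^sub>R matpow B k) ** N)"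
    using matpow_commute[OF comm] by (simp add: matrix_mult_scaleR_left matrix_mult_scaleR_right)
  also have "\<dots> = mat_qexp q a B ** N"
    unfolding mat_qexp_def qexp_series_def
    by (rule bounded_linear.suminf[OF bounded_linear_matrix_mult_right s, symmetric])
  finally show ?thesis .
qed

lemma mat_qexp_at_0 [simp]: "mat_qexp q a (0::'m::finite cmat) = mat 1"
  unfolding mat_qexp_def by (subst qexp_series_eq_first) (auto simp: gr0_conv_Suc)

lemma norm_mat_qexp_minus_mat_1_le:
  assumes q: "q > 1" and a: "a \<ge> 0"
    and small: "a * (real CARD('m) ^ 3 * norm B) / (q - 1) \<le> 1/2"
  shows "norm (mat_qexp q a (B::'m::finite cmat) - mat 1)
    \<le> 2 * norm (mat 1 :: 'm cmat) * (a * (real CARD('m) ^ 3 * norm B) / (q - 1))"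
  using qexp_series_minus_first_le[OF q a _ norm_matpow_le small]
  by (simp add: mat_qexp_def)

lemma holomorphic_mat_qexp_entry:
  assumes q: "q > 1" and a: "a \<ge> 0"
  shows "(\<lambda>z. mat_qexp q a (cmat_scale z (C::'m::finite cmat)) $ i $ j) holomorphic_on S"
proof -
  define c where "c k = of_real (qexp_coeff q a k) * matpow C k $ i $ j" for k
  have coeff_term: "c k * z ^ k = (qexp_coeff q a k *\<^sub>R matpow (cmat_scale z C) k) $ i $ j" for k z
    by (simp add: c_def matpow_cmat_scale) (simp add: scaleR_conv_of_real mult_ac)
  have "(\<lambda>z. mat_qexp q a (cmat_scale z C) $ i $ j) = (\<lambda>z. \<Sum>k. c k * z ^ k)"
  proof
    fix z
    show "mat_qexp q a (cmat_scale z C) $ i $ j = (\<Sum>k. c k * z ^ k)"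
      unfolding coeff_term mat_qexp_def qexp_series_def
      using bounded_linear.suminf[OF bounded_linear_matrix_entry[of i j]
          summable_mat_qexp[OF q a, of "cmat_scale z C"]] by simp
  qed
  moreover have "summable (\<lambda>k. c k * z ^ k)" for z
    unfolding coeff_term
    by (rule summable_comparison_test'[OF summable_norm_qexp_series[OF q a norm_matpow_le]])
       (rule norm_matrix_entry_le)
  ultimately show ?thesis by (simp add: holomorphic_on_power_series)
qed

section \<open>Theta factors\<close>

text \<open>At a zero \<open>p\<close> of \<open>g\<close>, write \<open>g w = (w - p)\<^sup>N h w\<close> with \<open>h p \<noteq> 0\<close>; then
  \<open>(w - p)\<^sup>N f w / g w = f w / h w\<close> near \<open>p\<close>.\<close>
lemma mero_on_divide:
  assumes S: "open S" "connected S" and f: "f holomorphic_on S" and g: "g holomorphic_on S"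
    and z0: "z0 \<in> S" "g z0 \<noteq> 0"
  shows "mero_on S (\<lambda>z. f z / g z)"
  unfolding mero_on_def
proof (intro exI[of _ "{z\<in>S. g z = 0}"] conjI ballI)
  show "{z\<in>S. g z = 0} \<subseteq> S" by blast
  show "\<not> p islimpt {z\<in>S. g z = 0}" if p: "p \<in> S" for p
  proof
    assume lim: "p islimpt {z\<in>S. g z = 0}"
    have "g z0 = 0"
      by (rule analytic_continuation[OF g S _ p lim _ z0(1)]) auto
    with z0 show False by simp
  qed
  show "(\<lambda>z. f z / g z) holomorphic_on S - {z\<in>S. g z = 0}"
    by (intro holomorphic_intros holomorphic_on_subset[OF f] holomorphic_on_subset[OF g]) auto
next
  fix p assume "p \<in> {z\<in>S. g z = 0}"
  then have p: "p \<in> S" "g p = 0" by auto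
  have nc: "\<not> g constant_on S"
  proof
    assume "g constant_on S"
    then obtain y where "\<forall>x\<in>S. g x = y" unfolding constant_on_def by blast
    with p z0 show False by metis
  qed
  obtain h r N where "0 < N" "0 < r" "ball p r \<subseteq> S" and h: "h holomorphic_on ball p r"
    and gh: "\<And>w. w \<in> ball p r \<Longrightarrow> g w = (w - p) ^ N * h w"
    and h0: "\<And>w. w \<in> ball p r \<Longrightarrow> h w \<noteq> 0"
    using holomorphic_factor_zero_nonconstant[OF g S p nc] by metis
  then have "(\<lambda>w. f w / h w) holomorphic_on ball p r"
    using holomorphic_on_subset[OF f] by (intro holomorphic_intros) auto
  then have "isCont (\<lambda>w. f w / h w) p"
    using \<open>0 < r\<close> by (intro continuous_on_interior[OF holomorphic_on_imp_continuous_on]) auto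
  then have lim: "((\<lambda>w. f w / h w) \<longlongrightarrow> f p / h p) (at p)" by (rule isContD)
  have "eventually (\<lambda>w. w \<in> ball p r - {p}) (at p)"
    using \<open>0 < r\<close> by (intro eventually_at_in_open) auto
  then have "eventually (\<lambda>w. f w / h w = (w - p) ^ N * (f w / g w)) (at p)"
    by eventually_elim (use gh h0 in auto)
  then have "((\<lambda>w. (w - p) ^ N * (f w / g w)) \<longlongrightarrow> f p / h p) (at p)"
    using lim by (rule tendsto_cong[THEN iffD1])
  then show "\<exists>N c. ((\<lambda>w. (w - p) ^ N * (f w / g w)) \<longlongrightarrow> c) (at p)" by blast
qed

definition theta0 :: "real \<Rightarrow> real \<Rightarrow> complex \<Rightarrow> complex" where
  "theta0 q c z = qexp q q (of_real c * z)"

definition theta_inf :: "real \<Rightarrow> real \<Rightarrow> complex \<Rightarrow> complex" where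
  "theta_inf q c z = qexp q 1 (1 / (of_real c * z))"

lemma theta0_functional_eq:
  assumes q: "q > 1"
  shows "theta0 q c (of_real q * z) = (1 + of_real (q * c) * z) * theta0 q c z"
  using qexp_functional_eq[of q q "of_real c * z"] q unfolding theta0_def by (simp add: mult_ac)

lemma theta_inf_functional_eq:
  assumes q: "q > 1"
  shows "theta_inf q c z = (1 + 1 / (of_real (q * c) * z)) * theta_inf q c (of_real q * z)"
proof -
  define y where "y = 1 / (of_real (q * c) * z)"
  have "1 / (of_real c * z) = of_real q * y" and "1 / (of_real c * (of_real q * z)) = y"
    using q by (simp_all add: y_def field_simps)
  then show ?thesis
    using qexp_functional_eq[of q 1 y] q unfolding theta_inf_def y_def[symmetric] by simp
qed

lemma theta_functional_eq:
  assumes q: "q > 1" and c: "c > 0" and z: "z \<noteq> 0"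
  shows "theta0 q c (of_real q * z) * theta_inf q c (of_real q * z)
       = of_real (q * c) * z * (theta0 q c z * theta_inf q c z)"
proof -
  have nz: "of_real (q * c) * z \<noteq> 0" using q c z by simp
  have "theta0 q c (of_real q * z) * theta_inf q c (of_real q * z)
      = (1 + of_real (q * c) * z) * theta0 q c z * theta_inf q c (of_real q * z)"
    by (simp add: theta0_functional_eq[OF q])
  also have "\<dots> = of_real (q * c) * z
      * (theta0 q c z * ((1 + 1 / (of_real (q * c) * z)) * theta_inf q c (of_real q * z)))"
    using nz by (simp add: field_simps)
  finally show ?thesis by (simp only: theta_inf_functional_eq[OF q, of c z, symmetric])
qed

lemma theta0_at_0 [simp]: "theta0 q c 0 = 1"
  by (simp add: theta0_def)

lemma theta0_nonzero:
  assumes q: "q > 1" and c: "c > 0" and small: "q * c * norm z / (q - 1) < 1/2"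
  shows "theta0 q c z \<noteq> 0"
  using qexp_nonzero[of q q "of_real c * z"] q c small unfolding theta0_def by (simp add: norm_mult)

lemma holomorphic_theta0:
  assumes q: "q > 1"
  shows "theta0 q c holomorphic_on S"
proof -
  have "(qexp q q \<circ> (\<lambda>z. of_real c * z)) holomorphic_on S"
    by (intro holomorphic_on_compose holomorphic_qexp) (use q in auto)
  then show ?thesis by (simp add: theta0_def[abs_def] o_def)
qed

lemma holomorphic_theta_inf:
  assumes q: "q > 1" and c: "c \<noteq> 0" and S: "0 \<notin> S"
  shows "theta_inf q c holomorphic_on S"
proof -
  have "(\<lambda>z. 1 / (of_real c * z)) holomorphic_on S"
    by (intro holomorphic_intros) (use c S in auto)
  then have "(qexp q 1 \<circ> (\<lambda>z. 1 / (of_real c * z))) holomorphic_on S"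
    by (intro holomorphic_on_compose_gen[OF _ holomorphic_qexp[of q 1 UNIV]]) (use q in auto)
  then show ?thesis by (simp add: theta_inf_def[abs_def] o_def)
qed

lemma inverse_scale_le:
  assumes q: "q > 1" and c: "c > 0" and \<beta>: "1 / (c * (q - 1)) \<le> \<beta>"
    and r: "r > 0" "r \<le> norm w"
  shows "1 / (c * norm w * (q - 1)) \<le> \<beta> / r"
proof -
  have "1 / (c * norm w * (q - 1)) = (1 / (c * (q - 1))) / norm w" by (simp add: field_simps)
  also have "\<dots> \<le> \<beta> / norm w" by (intro divide_right_mono \<beta>) simp
  also have "\<dots> \<le> \<beta> / r"
  proof (rule divide_left_mono)
    have "0 < 1 / (c * (q - 1))" using q c by simp
    then show "0 \<le> \<beta>" using \<beta> by linarith
  qed (use r in \<open>auto intro!: mult_pos_pos\<close>)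
  finally show ?thesis .
qed

lemma theta_inf_near_1:
  assumes q: "q > 1" and c: "c > 0" and \<beta>: "1 / (c * (q - 1)) \<le> \<beta>"
    and r: "r > 0" "r \<le> norm w" and small: "\<beta> / r \<le> 1/4"
  shows "norm (theta_inf q c w - 1) \<le> 2 * (\<beta> / r) \<and> theta_inf q c w \<noteq> 0"
proof -
  have x: "1 * norm (1 / (of_real c * w)) / (q - 1) \<le> \<beta> / r"
    using inverse_scale_le[OF q c \<beta> r] c by (simp add: norm_divide norm_mult)
  show ?thesis
    using norm_qexp_minus_1_le[OF q, of 1 "1 / (of_real c * w)"]
      qexp_nonzero[OF q, of 1 "1 / (of_real c * w)"] x small
    unfolding theta_inf_def by auto
qed

section \<open>The gauge transformations\<close>

definition E_gauge :: "real \<Rightarrow> real \<Rightarrow> real \<Rightarrow> int \<Rightarrow> ('m::finite) cmat \<Rightarrow> complex \<Rightarrow> 'm cmat" where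
  "E_gauge q s u n C w =
     cmat_scale (theta0 q s w powi n / theta0 q u w) (mat_qexp q q (cmat_scale w C))"

definition F_gauge :: "real \<Rightarrow> real \<Rightarrow> real \<Rightarrow> int \<Rightarrow> ('m::finite) cmat \<Rightarrow> complex \<Rightarrow> 'm cmat" where
  "F_gauge q s u n D w =
     cmat_scale (theta_inf q s w powi n / theta_inf q u w) (mat_qexp q 1 (cmat_scale (1 / w) D))"

lemma theta_quotient_functional_eq:
  assumes q: "q > 1" and s: "s > 0" and t: "t > 0" and z: "z \<noteq> 0"
    and u: "u = (q * s) powi n * t"
  defines "G \<equiv> \<lambda>w. (theta0 q s w * theta_inf q s w) powi n / (theta0 q u w * theta_inf q u w)"
  shows "G (of_real q * z) * (of_real (q * t) * z) = G z * z powi n"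
proof -
  define ys where "ys = theta0 q s z * theta_inf q s z"
  define yu where "yu = theta0 q u z * theta_inf q u z"
  have u0: "u > 0" using q s t by (simp add: u)
  have qs: "of_real ((q * s) powi n) \<noteq> (0::complex)" using q s by simp
  have qt: "of_real (q * t) * z \<noteq> 0" using q t z by simp
  have "G (of_real q * z) = (of_real (q * s) * z) powi n * ys powi n / (of_real (q * u) * z * yu)"
    unfolding G_def ys_def yu_def theta_functional_eq[OF q s z] theta_functional_eq[OF q u0 z]
    by (simp add: power_int_mult_distrib)
  also have "(of_real (q * s) * z) powi n = of_real ((q * s) powi n) * z powi n"
    by (simp add: power_int_mult_distrib)
  also have "of_real (q * u) * z * yu = of_real ((q * s) powi n) * ((of_real (q * t) * z) * yu)"
    by (simp add: u mult_ac)
  finally have "G (of_real q * z) = z powi n * ys powi n / ((of_real (q * t) * z) * yu)"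
    by (simp only: mult.assoc nonzero_mult_divide_mult_cancel_left[OF qs])
  then have "G (of_real q * z) * (of_real (q * t) * z) = z powi n * (ys powi n / yu)"
    using qt by (simp add: field_simps)
  then show ?thesis by (simp add: G_def ys_def yu_def mult.commute)
qed

text \<open>With \<open>L(w) = e\<^sub>q(w C)\<close> and \<open>M(w) = e\<^sub>1(D / w)\<close>, where \<open>D = C\<^sup>-\<^sup>1\<close>:
  \<open>L(q z) = (1 + q z C) L(z)\<close> and \<open>M(z) = (1 + D / (q z)) M(q z)\<close>, so \<open>L M\<close> gets multiplied
  by \<open>q z C\<close>.\<close>
lemma mat_qexp_pair_functional_eq:
  fixes C D :: "'m::finite cmat"
  assumes q: "q > 1" and z: "z \<noteq> 0" and CD: "C ** D = mat 1"
  defines "L \<equiv> \<lambda>w. mat_qexp q q (cmat_scale w C)" and "M \<equiv> \<lambda>w. mat_qexp q 1 (cmat_scale (1 / w) D)"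
  shows "L (of_real q * z) ** M (of_real q * z) = cmat_scale (of_real q * z) C ** (L z ** M z)"
proof -
  define B where "B = cmat_scale (of_real q * z) C"
  define B' where "B' = cmat_scale (1 / (of_real q * z)) D"
  have Lq: "L (of_real q * z) = (mat 1 + B) ** L z"
  proof -
    have "cmat_scale (of_real q * z) C = q *\<^sub>R cmat_scale z C"
      by (simp add: cmat_scale_of_real[symmetric] cmat_scale_cmat_scale)
    then show ?thesis
      unfolding L_def B_def using mat_qexp_functional_eq[OF q, of q "cmat_scale z C"] q
      by (simp add: matrix_add_rdistrib matrix_mult_scaleR_left)
  qed
  have Mz: "M z = (mat 1 + B') ** M (of_real q * z)"
  proof -
    have "cmat_scale (1 / z) D = q *\<^sub>R B'"
      unfolding B'_def using q by (simp add: cmat_scale_of_real[symmetric] cmat_scale_cmat_scale)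
    then show ?thesis
      unfolding M_def B'_def using mat_qexp_functional_eq[OF q, of 1 "cmat_scale (1 / (of_real q * z)) D"]
      by (simp add: matrix_add_rdistrib)
  qed
  have BL: "B ** L z = L z ** B"
    unfolding L_def B_def
    by (rule mat_qexp_commute[OF q]) (use q in \<open>auto simp: cmat_scale_mult mult.commute\<close>)
  have BB': "B ** B' = mat 1"
    unfolding B_def B'_def using q z by (simp add: cmat_scale_mult CD cmat_scale_mat_1)
  have "B ** (L z ** M z) = L z ** (B ** (mat 1 + B')) ** M (of_real q * z)"
    by (simp add: Mz BL matrix_mul_assoc)
  also have "L z ** (B ** (mat 1 + B')) = (mat 1 + B) ** L z"
    by (simp add: matrix_add_ldistrib matrix_add_rdistrib BB' BL add.commute)
  finally show ?thesis by (simp add: Lq B_def)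
qed

lemma mat_qexp_pair_commute:
  fixes N C D :: "'m::finite cmat"
  assumes q: "q > 1" and NC: "N ** C = C ** N" and ND: "N ** D = D ** N"
  shows "N ** (mat_qexp q q (cmat_scale w C) ** mat_qexp q 1 (cmat_scale v D))
       = (mat_qexp q q (cmat_scale w C) ** mat_qexp q 1 (cmat_scale v D)) ** N"
proof -
  have "N ** mat_qexp q q (cmat_scale w C) = mat_qexp q q (cmat_scale w C) ** N"
    by (rule mat_qexp_commute[OF q]) (use q NC in \<open>auto simp: cmat_scale_mult_left cmat_scale_mult_right\<close>)
  moreover have "N ** mat_qexp q 1 (cmat_scale v D) = mat_qexp q 1 (cmat_scale v D) ** N"
    by (rule mat_qexp_commute[OF q]) (use ND in \<open>auto simp: cmat_scale_mult_left cmat_scale_mult_right\<close>)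
  ultimately show ?thesis by (metis matrix_mul_assoc)
qed

lemma gauge_product_equation:
  fixes A :: "'m::finite cmat"
  assumes q: "q > 1" and s: "s > 0" and t: "t > 0" and z: "z \<noteq> 0" and A: "invertible A"
    and u: "u = (q * s) powi n * t"
  defines "Y \<equiv> \<lambda>w. E_gauge q s u n (t *\<^sub>R A) w ** F_gauge q s u n ((1 / t) *\<^sub>R matrix_inv A) w"
  shows "Y (of_real q * z) = mat (z powi n) ** A ** Y z
     \<and> mat (z powi n) ** A ** Y z = Y z ** A ** mat (z powi n)"
proof -
  define C where "C = t *\<^sub>R A"
  define D where "D = (1 / t) *\<^sub>R matrix_inv A"
  have CD: "C ** D = mat 1" and AD: "A ** D = D ** A"
    using invertible_matrix_inv[OF A] t
    by (simp_all add: C_def D_def matrix_mult_scaleR_left matrix_mult_scaleR_right)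
  have AC: "A ** C = C ** A" by (simp add: C_def matrix_mult_scaleR_left matrix_mult_scaleR_right)
  define L where "L w = mat_qexp q q (cmat_scale w C)" for w
  define M where "M w = mat_qexp q 1 (cmat_scale (1 / w) D)" for w
  define G where "G w = (theta0 q s w * theta_inf q s w) powi n / (theta0 q u w * theta_inf q u w)" for w
  have Y: "Y w = cmat_scale (G w) (L w ** M w)" for w
    by (simp add: Y_def C_def[symmetric] D_def[symmetric] E_gauge_def F_gauge_def cmat_scale_mult
        G_def L_def M_def power_int_mult_distrib)
  have ALM: "A ** (L z ** M z) = (L z ** M z) ** A"
    unfolding L_def M_def by (rule mat_qexp_pair_commute[OF q AC AD])
  have "Y (of_real q * z) = cmat_scale (G (of_real q * z)) (cmat_scale (of_real q * z) C ** (L z ** M z))"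
    unfolding Y L_def M_def by (simp only: mat_qexp_pair_functional_eq[OF q z CD])
  also have "\<dots> = cmat_scale (G (of_real q * z) * (of_real (q * t) * z)) (A ** (L z ** M z))"
    by (simp add: C_def cmat_scale_of_real[symmetric] cmat_scale_mult_left cmat_scale_cmat_scale mult_ac)
  also have "\<dots> = cmat_scale (G z * z powi n) (A ** (L z ** M z))"
    unfolding G_def by (simp only: theta_quotient_functional_eq[OF q s t z u])
  finally show ?thesis
    by (simp add: Y ALM mat_mult_eq_cmat_scale mult_mat_eq_cmat_scale cmat_scale_mult_left
        cmat_scale_mult_right cmat_scale_cmat_scale mult.commute)
qed

section \<open>Estimates for \<open>F_gauge\<close>\<close>

lemma norm_power_minus_1_le:
  fixes x :: complex
  assumes "norm x \<le> 1"
  shows "norm ((1 + x) ^ j - 1) \<le> (2 ^ j - 1) * norm x"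
proof (induction j)
  case (Suc j)
  have "(1 + x) ^ Suc j - 1 = (1 + x) * ((1 + x) ^ j - 1) + x" by (simp add: algebra_simps)
  then have "norm ((1 + x) ^ Suc j - 1) \<le> norm (1 + x) * norm ((1 + x) ^ j - 1) + norm x"
    by (metis norm_mult norm_triangle_ineq)
  also have "\<dots> \<le> 2 * ((2 ^ j - 1) * norm x) + norm x"
    using assms norm_triangle_ineq[of 1 x] by (intro add_mono mult_mono Suc) auto
  also have "\<dots> = (2 ^ Suc j - 1) * norm x" by (simp add: algebra_simps)
  finally show ?case .
qed simp

lemma norm_power_int_minus_1_le:
  fixes x :: complex
  assumes x: "norm x \<le> 1/2"
  shows "norm ((1 + x) powi m - 1) \<le> 4 ^ nat \<bar>m\<bar> * norm x"
proof (cases "m \<ge> 0")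
  case True
  have "(2::real) ^ nat m \<le> 4 ^ nat m" by (intro power_mono) auto
  then have "(2 ^ nat m - 1) * norm x \<le> 4 ^ nat \<bar>m\<bar> * norm x"
    using True by (intro mult_right_mono) auto
  with norm_power_minus_1_le[of x "nat m"] x True show ?thesis
    by (simp add: power_int_def)
next
  case False
  define j where "j = nat (- m)"
  have n1x: "norm (1 + x) \<ge> 1/2"
    using norm_triangle_ineq2[of 1 "-x"] x by simp
  then have nz: "(1 + x) ^ j \<noteq> 0" by auto
  have npow: "norm ((1 + x) ^ j) \<ge> (1/2) ^ j" unfolding norm_power by (intro power_mono n1x) simp
  have "(1 + x) powi m - 1 = - ((1 + x) ^ j - 1) / (1 + x) ^ j"
    using False nz by (simp add: power_int_def j_def field_simps)
  then have "norm ((1 + x) powi m - 1) = norm ((1 + x) ^ j - 1) / norm ((1 + x) ^ j)"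
    by (simp add: norm_divide norm_minus_commute)
  also have "\<dots> \<le> ((2 ^ j - 1) * norm x) / (1/2) ^ j"
    by (intro frac_le norm_power_minus_1_le) (use x npow in auto)
  also have "\<dots> \<le> (2 ^ j * norm x) * 2 ^ j" by (simp add: power_one_over mult_right_mono)
  also have "\<dots> = 4 ^ j * norm x" by (simp add: power_mult_distrib[symmetric] mult_ac)
  finally show ?thesis using False by (simp add: j_def)
qed

lemma norm_power_int_divide_minus_1_le:
  fixes a b :: complex
  assumes a: "norm (a - 1) \<le> e" and b: "norm (b - 1) \<le> e" and e: "e \<le> 1/4"
  shows "norm (a powi n / b - 1) \<le> 2 * (4 ^ nat \<bar>n\<bar> + 1) * e"
proof -
  have e0: "0 \<le> e" using a norm_ge_zero order_trans by blast
  have "norm (a powi n - 1) \<le> 4 ^ nat \<bar>n\<bar> * norm (a - 1)"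
    using norm_power_int_minus_1_le[of "a - 1" n] a e by simp
  also have "\<dots> \<le> 4 ^ nat \<bar>n\<bar> * e" by (intro mult_left_mono a) simp
  finally have an: "norm (a powi n - 1) \<le> 4 ^ nat \<bar>n\<bar> * e" .
  have nb: "norm b \<ge> 1/2"
    using norm_triangle_ineq2[of 1 "1 - b"] b e by (simp add: norm_minus_commute)
  then have "b \<noteq> 0" by auto
  then have "a powi n / b - 1 = (a powi n - 1 + (1 - b)) / b" by (simp add: field_simps)
  then have "norm (a powi n / b - 1) = norm (a powi n - 1 + (1 - b)) / norm b"
    by (simp add: norm_divide)
  also have "\<dots> \<le> (4 ^ nat \<bar>n\<bar> * e + e) / (1/2)"
    using norm_triangle_ineq[of "a powi n - 1" "1 - b"] an b e0 nb
    by (intro frac_le) (auto simp: norm_minus_commute)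
  finally show ?thesis by (simp add: algebra_simps)
qed

lemma norm_power_int_mult_minus_1_le:
  fixes w1 w2 :: complex
  assumes w1: "norm w1 \<le> e" and w2: "norm w2 \<le> e" and e: "e \<le> 1/4"
  shows "norm ((1 + w1) powi (- n) * (1 + w2) - 1) \<le> (1 + 2 * 4 ^ nat \<bar>n\<bar>) * e"
proof -
  define a where "a = (1 + w1) powi (- n)"
  have "norm (a - 1) \<le> 4 ^ nat \<bar>n\<bar> * norm w1"
    using norm_power_int_minus_1_le[of w1 "- n"] w1 e by (simp add: a_def)
  also have "\<dots> \<le> 4 ^ nat \<bar>n\<bar> * e" by (intro mult_left_mono w1) simp
  finally have a1: "norm (a - 1) \<le> 4 ^ nat \<bar>n\<bar> * e" .
  have e4: "4 ^ nat \<bar>n\<bar> * e \<le> 4 ^ nat \<bar>n\<bar>"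
    using e order_trans[OF norm_ge_zero w1] by (intro mult_left_le) auto
  have "norm a \<le> 1 + norm (a - 1)" using norm_triangle_ineq[of 1 "a - 1"] by simp
  then have na: "norm a \<le> 1 + 4 ^ nat \<bar>n\<bar>" using a1 e4 by linarith
  have "a * (1 + w2) - 1 = a * w2 + (a - 1)" by (simp add: algebra_simps)
  then have "norm (a * (1 + w2) - 1) \<le> norm a * norm w2 + norm (a - 1)"
    by (metis norm_mult norm_triangle_ineq)
  also have "\<dots> \<le> (1 + 4 ^ nat \<bar>n\<bar>) * e + 4 ^ nat \<bar>n\<bar> * e"
    by (intro add_mono mult_mono na w2 a1) auto
  finally show ?thesis by (simp add: a_def algebra_simps)
qed

text \<open>Estimates for \<open>F_gauge\<close> on \<open>|z| \<ge> r\<close>, where everything is controlled by \<open>\<beta> / r\<close>;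
  later \<open>\<beta> = O(q - 1)\<close>.\<close>
locale F_gauge_bounds =
  fixes q T u \<beta> r :: real and D :: "'m::finite cmat"
  assumes q: "1 < q" "q < 2" and T: "0 < T" and u: "0 < u"
    and T_bound: "1 / (T * (q - 1)) \<le> \<beta>" and u_bound: "1 / (u * (q - 1)) \<le> \<beta>"
    and D_bound: "norm D \<le> (q - 1) * \<beta>"
    and r: "0 < r" and small: "real CARD('m) ^ 3 * (\<beta> / r) \<le> 1/8"
begin

lemma ratio_bounds: "0 < \<beta>" "0 \<le> \<beta> / r" "\<beta> / r \<le> 1/8"
proof -
  have "0 < 1 / (T * (q - 1))" using T q by simp
  then show "0 < \<beta>" using T_bound by linarith
  then show e0: "0 \<le> \<beta> / r" using r by simp
  have "1 * (\<beta> / r) \<le> real CARD('m) ^ 3 * (\<beta> / r)"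
    by (rule mult_right_mono[OF card_cube_ge_1 e0])
  then show "\<beta> / r \<le> 1/8" using small by linarith
qed

lemma theta_inf_T_near_1:
  assumes "r \<le> norm w"
  shows "norm (theta_inf q T w - 1) \<le> 2 * (\<beta> / r) \<and> theta_inf q T w \<noteq> 0"
  using theta_inf_near_1[OF q(1) T T_bound r assms] ratio_bounds by simp

lemma theta_inf_u_near_1:
  assumes "r \<le> norm w"
  shows "norm (theta_inf q u w - 1) \<le> 2 * (\<beta> / r) \<and> theta_inf q u w \<noteq> 0"
  using theta_inf_near_1[OF q(1) u u_bound r assms] ratio_bounds by simp

lemma norm_scaled_D_le:
  assumes "r \<le> norm z"
  shows "norm (cmat_scale (1 / z) D) \<le> (q - 1) * (\<beta> / r)"
proof -
  have "norm (cmat_scale (1 / z) D) = norm D / norm z" by (simp add: norm_cmat_scale norm_divide)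
  also have "\<dots> \<le> (q - 1) * \<beta> / r"
    using D_bound assms r q ratio_bounds by (intro frac_le) auto
  finally show ?thesis by simp
qed

lemma norm_theta_inf_quotient_minus_1_le:
  assumes z: "r \<le> norm z"
  shows "norm (theta_inf q T z powi n / theta_inf q u z - 1) \<le> 2 * (4 ^ nat \<bar>n\<bar> + 1) * (2 * (\<beta> / r))"
  using norm_power_int_divide_minus_1_le[of _ "2 * (\<beta> / r)"] theta_inf_T_near_1[OF z]
    theta_inf_u_near_1[OF z] ratio_bounds
  by simp

lemma norm_mat_qexp_scaled_D_minus_mat_1_le:
  assumes z: "r \<le> norm z"
  shows "norm (mat_qexp q 1 (cmat_scale (1 / z) D) - mat 1)
    \<le> 2 * norm (mat 1 :: 'm cmat) * (real CARD('m) ^ 3 * (\<beta> / r))"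
proof -
  have x: "1 * (real CARD('m) ^ 3 * norm (cmat_scale (1 / z) D)) / (q - 1)
      \<le> real CARD('m) ^ 3 * (\<beta> / r)"
    using mult_left_mono[OF norm_scaled_D_le[OF z], of "real CARD('m) ^ 3"] q
    by (simp add: field_simps)
  have "norm (mat_qexp q 1 (cmat_scale (1 / z) D) - mat 1)
      \<le> 2 * norm (mat 1 :: 'm cmat) * (1 * (real CARD('m) ^ 3 * norm (cmat_scale (1 / z) D)) / (q - 1))"
    by (rule norm_mat_qexp_minus_mat_1_le[OF q(1)]) (use x small in linarith)+
  also have "\<dots> \<le> 2 * norm (mat 1 :: 'm cmat) * (real CARD('m) ^ 3 * (\<beta> / r))"
    by (intro mult_left_mono x) simp
  finally show ?thesis .
qed

lemma norm_F_gauge_minus_mat_1_le: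
  assumes z: "r \<le> norm z"
  defines "n1 \<equiv> norm (mat 1 :: 'm cmat)" and "\<kappa> \<equiv> real CARD('m) ^ 3"
  shows "norm (F_gauge q T u n D z - mat 1) \<le> n1 * (2 + 6 * (4 ^ nat \<bar>n\<bar> + 1)) * (\<kappa> * (\<beta> / r))"
proof -
  define e where "e = \<beta> / r"
  have k1: "\<kappa> \<ge> 1" unfolding \<kappa>_def by (rule card_cube_ge_1)
  have e0: "0 \<le> e" and e8: "e \<le> 1/8" using ratio_bounds by (simp_all add: e_def)
  have n10: "n1 \<ge> 0" by (simp add: n1_def)
  define g where "g = theta_inf q T z powi n / theta_inf q u z"
  define Cn where "Cn = 2 * (4 ^ nat \<bar>n\<bar> + 1 :: real)"
  have Cn0: "Cn \<ge> 0" by (simp add: Cn_def)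
  have g1: "norm (g - 1) \<le> Cn * (2 * e)"
    using norm_theta_inf_quotient_minus_1_le[OF z] by (simp add: g_def Cn_def e_def)
  have ng: "norm g \<le> 1 + Cn * (2 * e)"
    using norm_triangle_ineq[of 1 "g - 1"] g1 by simp
  define M where "M = mat_qexp q 1 (cmat_scale (1 / z) D)"
  have Mb: "norm (M - mat 1) \<le> 2 * n1 * (\<kappa> * e)"
    using norm_mat_qexp_scaled_D_minus_mat_1_le[OF z] by (simp add: M_def n1_def \<kappa>_def e_def)
  have "norm (F_gauge q T u n D z - mat 1) \<le> norm g * norm (M - mat 1) + norm (g - 1) * n1"
    unfolding F_gauge_def g_def[symmetric] M_def[symmetric] n1_def
    by (rule norm_cmat_scale_minus_mat_1)
  also have "\<dots> \<le> (1 + Cn * (2 * e)) * (2 * n1 * (\<kappa> * e)) + Cn * (2 * e) * n1"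
    by (intro add_mono mult_mono ng Mb g1) (use n10 Cn0 e0 in auto)
  also have "\<dots> \<le> n1 * (2 + 3 * Cn) * (\<kappa> * e)"
  proof -
    define X where "X = n1 * (\<kappa> * e)"
    have X0: "0 \<le> X" using n10 k1 e0 by (simp add: X_def)
    have h1: "e * (Cn * X) \<le> 1/8 * (Cn * X)"
      by (rule mult_right_mono[OF e8]) (simp add: Cn0 X0)
    have "n1 * e \<le> X"
      using mult_left_mono[OF mult_right_mono[OF k1 e0] n10] by (simp add: X_def)
    then have h2: "Cn * (n1 * e) \<le> Cn * X" using Cn0 by (rule mult_left_mono)
    have "(1 + Cn * (2 * e)) * (2 * n1 * (\<kappa> * e)) + Cn * (2 * e) * n1
        = 2 * X + 4 * (e * (Cn * X)) + 2 * (Cn * (n1 * e))"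
      by (simp add: X_def algebra_simps)
    moreover have "n1 * (2 + 3 * Cn) * (\<kappa> * e) = 2 * X + 3 * (Cn * X)"
      by (simp add: X_def algebra_simps)
    moreover have "0 \<le> Cn * X" using Cn0 X0 by simp
    ultimately show ?thesis using h1 h2 by linarith
  qed
  finally show ?thesis by (simp add: Cn_def e_def algebra_simps)
qed

end

lemma norm_inverse_scaled_le:
  fixes w :: complex
  assumes q: "q > 1" and c: "c > 0" and \<beta>: "1 / (c * (q - 1)) \<le> \<beta>"
    and r: "r > 0" "r \<le> norm w"
  shows "norm (1 / (of_real (q * c) * w)) \<le> (q - 1) * (\<beta> / r)"
proof -
  have w0: "norm w > 0" using r by linarith
  have "norm (1 / (of_real (q * c) * w)) = (q - 1) * (1 / (c * norm w * (q - 1))) / q"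
    using q c w0 by (simp add: norm_divide norm_mult field_simps)
  also have "\<dots> \<le> (q - 1) * (1 / (c * norm w * (q - 1)))"
    using q c w0 by (simp add: divide_le_eq mult_le_cancel_left1)
  also have "\<dots> \<le> (q - 1) * (\<beta> / r)"
    using inverse_scale_le[OF q c \<beta> r] q by (intro mult_left_mono) auto
  finally show ?thesis .
qed

lemma power_int_quotient_shift:
  fixes a b w1 w2 :: complex
  assumes "1 + w1 \<noteq> 0" "1 + w2 \<noteq> 0"
  shows "a powi n / b = ((1 + w1) * a) powi n / ((1 + w2) * b) * ((1 + w1) powi (- n) * (1 + w2))"
proof -
  have inverse: "(1 + w1) powi n * (1 + w1) powi (- n) = 1"
    using assms(1) by (simp add: power_int_minus)
  have cancel: "(A * x) / (W * y) * (A' * W) = x / y" if "A * A' = 1" "W \<noteq> 0"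
    for A A' W x y :: complex
    using that by (cases "y = 0") (simp_all add: field_simps)
  show ?thesis
    unfolding power_int_mult_distrib using cancel[OF inverse assms(2), of "a powi n" b] by simp
qed

lemma norm_diff_mult_inverse_le:
  fixes F0 F1 N B :: "'m::finite cmat"
  assumes F0: "F0 = (mat 1 + B) ** N" and F1: "F1 - F0 = (cmat_scale (\<rho> - 1) (mat 1) - B) ** N"
    and inv: "invertible F0" and small: "real CARD('m) ^ 3 * norm B \<le> 1/2"
  shows "norm ((F1 - F0) ** matrix_inv F0)
    \<le> real CARD('m) ^ 3 * (norm (\<rho> - 1) * norm (mat 1 :: 'm cmat) + norm B) * (2 * norm (mat 1 :: 'm cmat))"
proof -
  define Y where "Y = N ** matrix_inv F0"
  have "(mat 1 + B) ** Y = mat 1"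
    using invertible_matrix_inv[OF inv] by (simp add: Y_def F0 matrix_mul_assoc)
  then have nY: "norm Y \<le> 2 * norm (mat 1 :: 'm cmat)"
    by (rule norm_right_inverse_near_mat_1[OF _ small])
  have "norm (cmat_scale (\<rho> - 1) (mat 1) - B) \<le> norm (\<rho> - 1) * norm (mat 1 :: 'm cmat) + norm B"
    using norm_triangle_ineq4[of "cmat_scale (\<rho> - 1) (mat 1)" B] by (simp add: norm_cmat_scale)
  then have "norm (cmat_scale (\<rho> - 1) (mat 1) - B) * norm Y
      \<le> (norm (\<rho> - 1) * norm (mat 1 :: 'm cmat) + norm B) * (2 * norm (mat 1 :: 'm cmat))"
    by (intro mult_mono nY) auto
  from mult_left_mono[OF this, of "real CARD('m) ^ 3"]
  have bound: "real CARD('m) ^ 3 * norm (cmat_scale (\<rho> - 1) (mat 1) - B) * norm Y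
      \<le> real CARD('m) ^ 3 * (norm (\<rho> - 1) * norm (mat 1 :: 'm cmat) + norm B) * (2 * norm (mat 1 :: 'm cmat))"
    by (simp add: mult.assoc)
  have "(F1 - F0) ** matrix_inv F0 = (cmat_scale (\<rho> - 1) (mat 1) - B) ** Y"
    by (simp add: F1 Y_def matrix_mul_assoc)
  then show ?thesis
    using order_trans[OF norm_matrix_mult_le bound] by simp
qed

context F_gauge_bounds
begin

lemma theta_inf_quotient_step:
  assumes z: "r \<le> norm z"
  obtains \<rho> where
    "theta_inf q T (of_real q * z) powi n / theta_inf q u (of_real q * z)
       = theta_inf q T z powi n / theta_inf q u z * \<rho>"
    and "norm (\<rho> - 1) \<le> (1 + 2 * 4 ^ nat \<bar>n\<bar>) * ((q - 1) * (\<beta> / r))"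
proof -
  define e where "e = \<beta> / r"
  have qe: "(q - 1) * e \<le> 1/4"
    using mult_right_mono[of "q - 1" 1 e] q ratio_bounds by (simp add: e_def)
  define wT where "wT = 1 / (of_real (q * T) * z)"
  define wu where "wu = 1 / (of_real (q * u) * z)"
  have wT: "norm wT \<le> (q - 1) * e" and wu: "norm wu \<le> (q - 1) * e"
    unfolding wT_def wu_def e_def
    by (intro norm_inverse_scaled_le[OF q(1)] T u T_bound u_bound r z)+
  have "1 + wT \<noteq> 0" "1 + wu \<noteq> 0"
    using wT wu qe by (auto simp: add_eq_0_iff)
  then have eq: "theta_inf q T (of_real q * z) powi n / theta_inf q u (of_real q * z)
      = theta_inf q T z powi n / theta_inf q u z * ((1 + wT) powi (- n) * (1 + wu))"
    unfolding wT_def wu_def theta_inf_functional_eq[OF q(1), of T z]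
      theta_inf_functional_eq[OF q(1), of u z]
    by (rule power_int_quotient_shift)
  have bound: "norm ((1 + wT) powi (- n) * (1 + wu) - 1) \<le> (1 + 2 * 4 ^ nat \<bar>n\<bar>) * ((q - 1) * e)"
    by (rule norm_power_int_mult_minus_1_le[OF wT wu qe])
  show thesis by (rule that[OF eq bound[unfolded e_def]])
qed

lemma F_gauge_step:
  assumes z: "r \<le> norm z"
  obtains \<rho> B N where "F_gauge q T u n D z = (mat 1 + B) ** N"
    and "F_gauge q T u n D (of_real q * z) - F_gauge q T u n D z
         = (cmat_scale (\<rho> - 1) (mat 1) - B) ** N"
    and "norm (\<rho> - 1) \<le> (1 + 2 * 4 ^ nat \<bar>n\<bar>) * ((q - 1) * (\<beta> / r))"
    and "norm B \<le> (q - 1) * (\<beta> / r)"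
proof -
  define qz where "qz = of_real q * z"
  have zq: "r \<le> norm qz"
    using z q r by (simp add: qz_def norm_mult) (smt (verit) mult_le_cancel_right1)
  define g where "g w = theta_inf q T w powi n / theta_inf q u w" for w
  obtain \<rho> where gq: "g qz = g z * \<rho>"
    and \<rho>: "norm (\<rho> - 1) \<le> (1 + 2 * 4 ^ nat \<bar>n\<bar>) * ((q - 1) * (\<beta> / r))"
    using theta_inf_quotient_step[OF z] unfolding g_def qz_def by blast
  define M where "M w = mat_qexp q 1 (cmat_scale (1 / w) D)" for w
  define B where "B = cmat_scale (1 / qz) D"
  have Mz: "M z = (mat 1 + B) ** M qz"
  proof -
    have "cmat_scale (1 / z) D = q *\<^sub>R B"
      unfolding B_def qz_def using q by (simp add: cmat_scale_of_real[symmetric] cmat_scale_cmat_scale)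
    then show ?thesis
      unfolding M_def B_def using mat_qexp_functional_eq[OF q(1), of 1 "cmat_scale (1 / qz) D"]
      by (simp add: matrix_add_rdistrib)
  qed
  have F: "F_gauge q T u n D w = cmat_scale (g w) (M w)" for w
    by (simp add: F_gauge_def g_def M_def)
  have F0: "F_gauge q T u n D z = (mat 1 + B) ** cmat_scale (g z) (M qz)"
    by (simp add: F Mz cmat_scale_mult_right)
  have "F_gauge q T u n D (of_real q * z) - F_gauge q T u n D z
      = cmat_scale (g z * \<rho>) (M qz) - cmat_scale (g z) (M qz + B ** M qz)"
    unfolding qz_def[symmetric] by (simp add: F Mz gq matrix_add_rdistrib)
  also have "\<dots> = (cmat_scale (\<rho> - 1) (mat 1) - B) ** cmat_scale (g z) (M qz)"
    by (simp add: matrix_diff_rdistrib cmat_scale_mult_left cmat_scale_mult_right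
        cmat_scale_diff cmat_scale_cmat_scale vec_eq_iff algebra_simps)
  finally show thesis
    by (rule that[OF F0 _ \<rho> norm_scaled_D_le[OF zq, folded B_def]])
qed

lemma norm_delta_F_gauge_le:
  assumes z: "r \<le> norm z" and inv: "invertible (F_gauge q T u n D z)"
  defines "n1 \<equiv> norm (mat 1 :: 'm cmat)" and "\<kappa> \<equiv> real CARD('m) ^ 3"
  shows "norm (delta_q q (F_gauge q T u n D) z ** matrix_inv (F_gauge q T u n D z))
    \<le> 2 * \<kappa> * n1 * ((1 + 2 * 4 ^ nat \<bar>n\<bar>) * n1 + 1) * (\<beta> / r)"
proof -
  obtain \<rho> B N where F0: "F_gauge q T u n D z = (mat 1 + B) ** N"
    and F1: "F_gauge q T u n D (of_real q * z) - F_gauge q T u n D z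
         = (cmat_scale (\<rho> - 1) (mat 1) - B) ** N"
    and \<rho>: "norm (\<rho> - 1) \<le> (1 + 2 * 4 ^ nat \<bar>n\<bar>) * ((q - 1) * (\<beta> / r))"
    and B: "norm B \<le> (q - 1) * (\<beta> / r)"
    using F_gauge_step[OF z] by blast
  have k1: "\<kappa> \<ge> 1" unfolding \<kappa>_def by (rule card_cube_ge_1)
  have n10: "n1 \<ge> 0" by (simp add: n1_def)
  have "(q - 1) * (\<beta> / r) \<le> 1 * (\<beta> / r)"
    by (rule mult_right_mono) (use q ratio_bounds in auto)
  then have "\<kappa> * norm B \<le> \<kappa> * (\<beta> / r)"
    using B k1 by (intro mult_left_mono) auto
  then have small_B: "real CARD('m) ^ 3 * norm B \<le> 1/2"
    using small unfolding \<kappa>_def by linarith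
  have "norm (delta_q q (F_gauge q T u n D) z ** matrix_inv (F_gauge q T u n D z))
      = (1 / (q - 1)) * norm ((F_gauge q T u n D (of_real q * z) - F_gauge q T u n D z)
          ** matrix_inv (F_gauge q T u n D z))"
    using q by (simp add: delta_q_def sigma_q_def matrix_mult_scaleR_left)
  also have "\<dots> \<le> (1 / (q - 1)) * (\<kappa> * (norm (\<rho> - 1) * n1 + norm B) * (2 * n1))"
    using mult_left_mono[OF norm_diff_mult_inverse_le[OF F0 F1 inv small_B], of "1 / (q - 1)"] q
    by (simp add: n1_def \<kappa>_def)
  also have "\<dots> \<le> (1 / (q - 1)) * (\<kappa> * ((1 + 2 * 4 ^ nat \<bar>n\<bar>) * ((q - 1) * (\<beta> / r)) * n1
      + (q - 1) * (\<beta> / r)) * (2 * n1))"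
    using q k1 n10 by (intro mult_left_mono mult_right_mono add_mono \<rho> B) auto
  also have "\<dots> = 2 * \<kappa> * n1 * ((1 + 2 * 4 ^ nat \<bar>n\<bar>) * n1 + 1) * (\<beta> / r)"
    using q r by (simp add: field_simps)
  finally show ?thesis .
qed

end

lemma power_int_eq_divide: "x powi n = x ^ nat n / x ^ nat (- n)" for x :: complex
  by (cases "n \<ge> 0") (simp_all add: power_int_def power_inverse divide_inverse)

lemma holomorphic_mat_qexp_inverse_entry:
  assumes q: "q > 1" and U: "0 \<notin> U"
  shows "(\<lambda>w. mat_qexp q 1 (cmat_scale (1 / w) (D::'m::finite cmat)) $ i $ j) holomorphic_on U"
proof -
  have "((\<lambda>v. mat_qexp q 1 (cmat_scale v D) $ i $ j) \<circ> (\<lambda>w. 1 / w)) holomorphic_on U"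
    by (intro holomorphic_on_compose_gen[OF _ holomorphic_mat_qexp_entry[OF q, of 1 D i j UNIV]])
       (use U in \<open>auto intro!: holomorphic_intros\<close>)
  then show ?thesis by (simp add: o_def)
qed

lemma holomorphic_F_gauge_entry:
  assumes q: "q > 1" and s: "s > 0" and u: "u > 0" and U: "0 \<notin> U"
    and nz: "\<And>w. w \<in> U \<Longrightarrow> theta_inf q s w \<noteq> 0 \<and> theta_inf q u w \<noteq> 0"
  shows "(\<lambda>w. F_gauge q s u n (D::'m::finite cmat) w $ i $ j) holomorphic_on U"
  unfolding F_gauge_def cmat_scale_entry
  by (intro holomorphic_intros holomorphic_mat_qexp_inverse_entry[OF q U] holomorphic_theta_inf[OF q _ U])
     (use s u nz in auto)

lemma holomorphic_E_gauge_entry: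
  assumes q: "q > 1" and nz: "\<And>w. w \<in> U \<Longrightarrow> theta0 q s w \<noteq> 0 \<and> theta0 q u w \<noteq> 0"
  shows "(\<lambda>w. E_gauge q s u n (C::'m::finite cmat) w $ i $ j) holomorphic_on U"
  unfolding E_gauge_def cmat_scale_entry
  by (intro holomorphic_intros holomorphic_theta0[OF q] holomorphic_mat_qexp_entry[OF q])
     (use q nz in auto)

lemma theta_inf_nonzero_far:
  assumes q: "q > 1" and c: "c > 0" and z: "2 / (c * (q - 1)) < norm z"
  shows "theta_inf q c z \<noteq> 0"
proof -
  have pos: "0 < c * (q - 1)" using q c by simp
  then have big: "2 < c * (q - 1) * norm z" using z by (simp add: field_simps)
  have "1 * norm (1 / (of_real c * z)) / (q - 1) = 1 / (c * (q - 1) * norm z)"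
    using c by (simp add: norm_divide norm_mult mult_ac)
  also have "\<dots> < 1/2" using big by (simp add: field_simps)
  finally have "1 * norm (1 / (of_real c * z)) / (q - 1) < 1/2" .
  then show ?thesis unfolding theta_inf_def by (rule qexp_nonzero[OF q, rotated]) simp
qed

lemma mero_on_F_gauge_entry:
  assumes q: "q > 1" and s: "s > 0" and u: "u > 0"
  shows "mero_on (- {0}) (\<lambda>w. F_gauge q s u n (D::'m::finite cmat) w $ i $ j)"
proof -
  define M where "M w = mat_qexp q 1 (cmat_scale (1 / w) D) $ i $ j" for w
  have "F_gauge q s u n D w $ i $ j
      = M w * theta_inf q s w ^ nat n / (theta_inf q u w * theta_inf q s w ^ nat (- n))" for w
    by (simp add: F_gauge_def M_def power_int_eq_divide field_simps)
  moreover have "mero_on (- {0})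
      (\<lambda>w. M w * theta_inf q s w ^ nat n / (theta_inf q u w * theta_inf q s w ^ nat (- n)))"
  proof (rule mero_on_divide)
    show "open (- {0::complex})" "connected (- {0::complex})"
      by (auto intro: connected_punctured_universe)
    show "(\<lambda>w. M w * theta_inf q s w ^ nat n) holomorphic_on - {0}"
      "(\<lambda>w. theta_inf q u w * theta_inf q s w ^ nat (- n)) holomorphic_on - {0}"
      unfolding M_def
      by (intro holomorphic_intros holomorphic_mat_qexp_inverse_entry[OF q]
          holomorphic_theta_inf[OF q]; use s u in simp)+
    define R where "R = 2 / (s * (q - 1)) + 2 / (u * (q - 1)) + 1"
    have R: "2 / (s * (q - 1)) < R" "2 / (u * (q - 1)) < R" "0 < R"
      using q s u by (simp_all add: R_def add_pos_pos)
    show "of_real R \<in> - {0::complex}" using R by simp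
    show "theta_inf q u (of_real R) * theta_inf q s (of_real R) ^ nat (- n) \<noteq> 0"
      using theta_inf_nonzero_far[OF q s] theta_inf_nonzero_far[OF q u] R by simp
  qed
  ultimately show ?thesis by simp
qed

lemma GL_conv_E_gauge:
  assumes q: "q > 1" and s: "s > 0" and u: "u > 0"
  shows "GL_conv (E_gauge q s u n (C::'m::finite cmat))"
  unfolding GL_conv_def
proof (intro conjI exI allI)
  define P where "P = q * (s + u)"
  have P: "P > 0" using q s u by (simp add: P_def)
  define r where "r = (q - 1) / (2 * P)"
  show "r > 0" unfolding r_def using q P by simp
  have "theta0 q c w \<noteq> 0" if c: "c > 0" "c \<le> s + u" and w: "w \<in> ball 0 r" for c w
  proof (rule theta0_nonzero[OF q c(1)])
    have "q * c * norm w \<le> q * (s + u) * norm w"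
      using c q by (intro mult_right_mono mult_left_mono) auto
    also have "\<dots> < P * r"
      using w P unfolding P_def by (intro mult_strict_left_mono) auto
    also have "\<dots> = (q - 1) / 2"
      using P by (simp add: r_def)
    finally show "q * c * norm w / (q - 1) < 1/2" using q by (simp add: field_simps)
  qed
  then show "(\<lambda>z. E_gauge q s u n C z $ i $ j) holomorphic_on ball 0 r" for i j
    using s u by (intro holomorphic_E_gauge_entry[OF q]) auto
  have "E_gauge q s u n C 0 = mat 1" by (simp add: E_gauge_def)
  then show "invertible (E_gauge q s u n C 0)"
    by (simp add: invertible_def exI[of _ "mat 1"])
qed

definition gauge_admissible :: "real \<Rightarrow> real \<Rightarrow> real \<Rightarrow> real \<Rightarrow> ('m::finite) cmat \<Rightarrow> bool" where
  "gauge_admissible b q T u D \<longleftrightarrow> 1 < q \<and> q < 2 \<and> 0 < T \<and> 0 < u \<and>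
     1 / (T * (q - 1)) \<le> b * (q - 1) \<and> 1 / (u * (q - 1)) \<le> b * (q - 1) \<and>
     norm D \<le> (q - 1) * (b * (q - 1))"

lemma F_gauge_bounds_if_admissible:
  fixes D :: "'m::finite cmat"
  assumes "gauge_admissible b q T u D" "0 < r" "real CARD('m) ^ 3 * b / r * (q - 1) < 1/8"
  shows "F_gauge_bounds q T u (b * (q - 1)) r D"
  using assms unfolding gauge_admissible_def F_gauge_bounds_def by (simp add: mult_ac)

lemma eventually_at_right_1_mult_less:
  fixes c \<delta> :: real
  assumes "0 < \<delta>"
  shows "\<forall>\<^sub>F q in at_right 1. c * (q - 1) < \<delta>"
proof -
  have "((\<lambda>q. c * (q - 1)) \<longlongrightarrow> c * (1 - 1)) (at_right (1::real))"
    by (intro tendsto_intros)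
  then show ?thesis by (rule order_tendstoD(2)) (use assms in simp)
qed

lemma compact_punctured_norm_bound:
  assumes "compact K" "K \<subseteq> - {0}"
  obtains \<rho> :: real where "\<rho> > 0" "\<And>z::complex. z \<in> K \<Longrightarrow> \<rho> \<le> norm z"
proof -
  obtain d where "d > 0" "\<forall>x\<in>K. d \<le> dist 0 x"
    using separate_point_closed[OF compact_imp_closed[OF assms(1)], of 0] assms(2) by blast
  then show ?thesis using that by auto
qed

context
  fixes b :: real and T u :: "real \<Rightarrow> real" and D :: "real \<Rightarrow> 'm::finite cmat" and n :: int
  assumes admissible: "\<forall>\<^sub>F q in at_right 1. gauge_admissible b q (T q) (u q) (D q)"
begin

lemma F_gauge_family_near_mat_1:
  assumes K: "compact K" "K \<subseteq> - {0}" and \<epsilon>: "\<epsilon> > 0"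
  shows "\<forall>\<^sub>F q in at_right 1. mat_analytic_on (F_gauge q (T q) (u q) n (D q)) K \<and>
           (\<forall>z\<in>K. norm (F_gauge q (T q) (u q) n (D q) z - mat 1) < \<epsilon>)"
proof -
  obtain \<rho> where \<rho>: "\<rho> > 0" "\<And>z. z \<in> K \<Longrightarrow> \<rho> \<le> norm z"
    using compact_punctured_norm_bound[OF K] by blast
  define r where "r = \<rho> / 2"
  have r_\<rho>: "0 < r" "r < \<rho>" using \<rho> by (simp_all add: r_def)
  define \<kappa> where "\<kappa> = real CARD('m) ^ 3"
  define K1 where "K1 = norm (mat 1 :: 'm cmat) * (2 + 6 * (4 ^ nat \<bar>n\<bar> + 1))"
  have "\<forall>\<^sub>F q in at_right 1. \<kappa> * b / r * (q - 1) < 1/8"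
    by (rule eventually_at_right_1_mult_less) simp
  moreover note eventually_at_right_1_mult_less[OF \<epsilon>, of "K1 * (\<kappa> * b / r)"]
  ultimately show ?thesis
    using admissible
  proof eventually_elim
    case (elim q)
    then interpret F_gauge_bounds q "T q" "u q" "b * (q - 1)" r "D q"
      using r_\<rho> by (intro F_gauge_bounds_if_admissible) (auto simp: \<kappa>_def)
    define U where "U = {w::complex. r < norm w}"
    have U: "open U" "0 \<notin> U"
      using r_\<rho> by (auto simp: U_def intro!: open_Collect_less continuous_intros)
    have "K \<subseteq> U"
    proof
      fix z assume "z \<in> K"
      with \<rho>(2) r_\<rho> show "z \<in> U" by (force simp: U_def)
    qed
    have "(\<lambda>w. F_gauge q (T q) (u q) n (D q) w $ i $ j) holomorphic_on U" for i j
      using theta_inf_T_near_1 theta_inf_u_near_1 q T u U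
      by (intro holomorphic_F_gauge_entry) (auto simp: U_def)
    then have "mat_analytic_on (F_gauge q (T q) (u q) n (D q)) K"
      unfolding mat_analytic_on_def using U \<open>K \<subseteq> U\<close> analytic_on_open analytic_on_subset by metis
    moreover have "norm (F_gauge q (T q) (u q) n (D q) z - mat 1) < \<epsilon>" if "z \<in> K" for z
    proof -
      have "r \<le> norm z" using \<rho>(2)[OF that] r_\<rho> by linarith
      from norm_F_gauge_minus_mat_1_le[OF this, of n]
      have "norm (F_gauge q (T q) (u q) n (D q) z - mat 1) \<le> K1 * (\<kappa> * b / r * (q - 1))"
        by (simp add: K1_def \<kappa>_def mult_ac)
      then show ?thesis using elim by linarith
    qed
    ultimately show ?case by blast
  qed
qed

lemma F_gauge_family_delta_small:
  assumes K: "compact K" "K \<subseteq> - {0}" and \<epsilon>: "\<epsilon> > 0"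
  shows "\<forall>\<^sub>F q in at_right 1. \<forall>z\<in>K.
           norm (delta_q q (F_gauge q (T q) (u q) n (D q)) z ** matrix_inv (F_gauge q (T q) (u q) n (D q) z)) < \<epsilon>"
proof -
  obtain r where r_pos: "r > 0" and K_bound: "\<And>z. z \<in> K \<Longrightarrow> r \<le> norm z"
    using compact_punctured_norm_bound[OF K] by blast
  define \<kappa> where "\<kappa> = real CARD('m) ^ 3"
  define \<mu> where "\<mu> = real CARD('m) ^ 2"
  define n1 where "n1 = norm (mat 1 :: 'm cmat)"
  define K1 where "K1 = n1 * (2 + 6 * (4 ^ nat \<bar>n\<bar> + 1))"
  define K2 where "K2 = 2 * \<kappa> * n1 * ((1 + 2 * 4 ^ nat \<bar>n\<bar>) * n1 + 1)"
  have "\<forall>\<^sub>F q in at_right 1. \<kappa> * b / r * (q - 1) < 1/8"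
    by (rule eventually_at_right_1_mult_less) simp
  moreover have "\<forall>\<^sub>F q in at_right 1. \<mu> * (K1 * (\<kappa> * b / r)) * (q - 1) < 1"
    by (rule eventually_at_right_1_mult_less) simp
  moreover note eventually_at_right_1_mult_less[OF \<epsilon>, of "K2 * (b / r)"]
  ultimately show ?thesis
    using admissible
  proof eventually_elim
    case (elim q)
    then interpret F_gauge_bounds q "T q" "u q" "b * (q - 1)" r "D q"
      using r_pos by (intro F_gauge_bounds_if_admissible) (auto simp: \<kappa>_def)
    show ?case
    proof
      fix z assume "z \<in> K"
      then have z: "r \<le> norm z" by (rule K_bound)
      from norm_F_gauge_minus_mat_1_le[OF z, of n]
      have "norm (F_gauge q (T q) (u q) n (D q) z - mat 1) \<le> K1 * (\<kappa> * b / r * (q - 1))"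
        by (simp add: K1_def n1_def \<kappa>_def mult_ac)
      then have "\<mu> * norm (F_gauge q (T q) (u q) n (D q) z - mat 1)
          \<le> \<mu> * (K1 * (\<kappa> * b / r)) * (q - 1)"
        by (subst mult.assoc, subst mult.assoc, intro mult_left_mono) (simp_all add: \<mu>_def mult_ac)
      then have "\<mu> * norm (F_gauge q (T q) (u q) n (D q) z - mat 1) < 1"
        using elim by linarith
      then have "invertible (F_gauge q (T q) (u q) n (D q) z)"
        by (intro invertible_near_mat_1) (simp add: \<mu>_def)
      from norm_delta_F_gauge_le[OF z this]
      have "norm (delta_q q (F_gauge q (T q) (u q) n (D q)) z ** matrix_inv (F_gauge q (T q) (u q) n (D q) z))
          \<le> K2 * (b / r) * (q - 1)"
        by (simp add: K2_def n1_def \<kappa>_def mult_ac)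
      then show "norm (delta_q q (F_gauge q (T q) (u q) n (D q)) z
          ** matrix_inv (F_gauge q (T q) (u q) n (D q) z)) < \<epsilon>"
        using elim by linarith
    qed
  qed
qed

lemma F_gauge_family_meromorphic:
  "\<forall>\<^sub>F q in at_right 1. (\<forall>i j. mero_on (- {0}) (\<lambda>z. F_gauge q (T q) (u q) n (D q) z $ i $ j)) \<and>
     (\<exists>z. z \<noteq> 0 \<and> mat_analytic_on (F_gauge q (T q) (u q) n (D q)) {z} \<and>
          det (F_gauge q (T q) (u q) n (D q) z) \<noteq> 0)"
proof -
  define \<mu> where "\<mu> = real CARD('m) ^ 2"
  have "1 / (\<mu> + 1) > 0" by (simp add: \<mu>_def add_pos_nonneg)
  with F_gauge_family_near_mat_1[of "{1}"]
  have near: "\<forall>\<^sub>F q in at_right 1. mat_analytic_on (F_gauge q (T q) (u q) n (D q)) {1} \<and>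
      norm (F_gauge q (T q) (u q) n (D q) 1 - mat 1) < 1 / (\<mu> + 1)"
    by simp
  show ?thesis
    using admissible near
  proof eventually_elim
    case (elim q)
    have "\<mu> \<ge> 0" by (simp add: \<mu>_def)
    with elim have "(\<mu> + 1) * norm (F_gauge q (T q) (u q) n (D q) 1 - mat 1) < 1"
      by (simp add: field_simps)
    then have "\<mu> * norm (F_gauge q (T q) (u q) n (D q) 1 - mat 1)
        + norm (F_gauge q (T q) (u q) n (D q) 1 - mat 1) < 1"
      by (simp add: distrib_right)
    then have "\<mu> * norm (F_gauge q (T q) (u q) n (D q) 1 - mat 1) < 1"
      using norm_ge_zero[of "F_gauge q (T q) (u q) n (D q) 1 - mat 1"] by linarith
    then have "det (F_gauge q (T q) (u q) n (D q) 1) \<noteq> 0"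
      by (simp add: \<mu>_def invertible_near_mat_1 flip: invertible_det_nz)
    moreover have "mero_on (- {0}) (\<lambda>z. F_gauge q (T q) (u q) n (D q) z $ i $ j)" for i j
      using elim by (intro mero_on_F_gauge_entry) (auto simp: gauge_admissible_def)
    ultimately show ?case using elim by (intro conjI exI[of _ 1]) auto
  qed
qed

lemma O_star_F_gauge_family: "O_star (\<lambda>z q. F_gauge q (T q) (u q) n (D q) z)"
  unfolding O_star_def
  using F_gauge_family_meromorphic F_gauge_family_near_mat_1 F_gauge_family_delta_small
  by (simp add: eta_contract_eq)

end

text \<open>The scales: \<open>T = (q - 1)\<^sup>-\<^sup>(\<^sup>k\<^sup>+\<^sup>2\<^sup>)\<close> is large enough that \<open>theta_inf\<close> is close to \<open>1\<close>,
  \<open>t \<ge> T\<close> makes \<open>D = (t A)\<^sup>-\<^sup>1\<close> of size \<open>O((q - 1)\<^sup>2)\<close>, and \<open>u = (q T)\<^sup>n t\<close> is forced by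
  \<open>theta_quotient_functional_eq\<close>; the exponent of \<open>t\<close> keeps \<open>u \<ge> T / 2\<^sup>|\<^sup>n\<^sup>|\<close> also for \<open>n < 0\<close>.\<close>
definition gauge_T :: "nat \<Rightarrow> real \<Rightarrow> real" where
  "gauge_T k q = 1 / (q - 1) ^ (k + 2)"

definition gauge_t :: "nat \<Rightarrow> int \<Rightarrow> real \<Rightarrow> real" where
  "gauge_t k n q = gauge_T k q ^ nat (max 1 (1 - n))"

definition gauge_u :: "nat \<Rightarrow> int \<Rightarrow> real \<Rightarrow> real" where
  "gauge_u k n q = (q * gauge_T k q) powi n * gauge_t k n q"

lemma gauge_T_ge_1:
  assumes "1 < q" "q < 2"
  shows "gauge_T k q \<ge> 1"
  using assms power_le_one[of "q - 1" "k + 2"] by (simp add: gauge_T_def)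

lemma gauge_T_le_gauge_t:
  assumes "1 < q" "q < 2"
  shows "gauge_T k q \<le> gauge_t k n q"
  using gauge_T_ge_1[OF assms] power_increasing[of 1 "nat (max 1 (1 - n))" "gauge_T k q"]
  by (simp add: gauge_t_def)

lemma inverse_gauge_T_le:
  assumes "1 < q" "q < 2"
  shows "1 / (gauge_T k q * (q - 1)) \<le> q - 1"
proof -
  have "1 / (gauge_T k q * (q - 1)) = (q - 1) * (q - 1) ^ k"
    using assms by (simp add: gauge_T_def field_simps)
  also have "\<dots> \<le> (q - 1) * 1"
    using assms power_le_one[of "q - 1" k] by (intro mult_left_mono) auto
  finally show ?thesis by simp
qed

lemma gauge_u_ge:
  assumes q: "1 < q" "q < 2"
  shows "gauge_T k q / 2 ^ nat \<bar>n\<bar> \<le> gauge_u k n q"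
proof -
  define T where "T = gauge_T k q"
  have T1: "T \<ge> 1" using gauge_T_ge_1[OF q] by (simp add: T_def)
  show ?thesis
  proof (cases "n \<ge> 0")
    case True
    then have u: "gauge_u k n q = (q * T) ^ nat n * T"
      by (simp add: gauge_u_def gauge_t_def T_def power_int_def)
    have "1 \<le> (q * T) ^ nat n"
      using mult_mono[of 1 q 1 T] T1 q by (intro one_le_power) simp
    then have "T \<le> gauge_u k n q" unfolding u using T1 by (simp add: mult_le_cancel_right1)
    moreover have "T / 2 ^ nat \<bar>n\<bar> \<le> T" using T1 by (simp add: divide_le_eq mult_le_cancel_left1)
    ultimately show ?thesis by (simp add: T_def)
  next
    case False
    define m where "m = nat (- n)"
    have "nat (max 1 (1 - n)) = Suc m" using False by (simp add: m_def)
    moreover have "(q * T) powi n = 1 / (q * T) ^ m"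
      using False by (simp add: power_int_def m_def field_simps)
    ultimately have "gauge_u k n q = T ^ Suc m / (q * T) ^ m"
      by (simp add: gauge_u_def gauge_t_def T_def)
    also have "\<dots> = T / q ^ m" using T1 q by (simp add: power_mult_distrib field_simps)
    finally have u: "gauge_u k n q = T / q ^ m" .
    have "q ^ m \<le> 2 ^ nat \<bar>n\<bar>" using q False power_mono[of q 2 m] by (simp add: m_def)
    then show ?thesis unfolding u T_def[symmetric] using T1 q by (intro divide_left_mono) auto
  qed
qed

lemma gauge_admissible_parameters:
  fixes A :: "'m::finite cmat"
  assumes q: "1 < q" "q < 2" and A: "norm (matrix_inv A) \<le> 1 / (q - 1) ^ k"
  shows "gauge_admissible (2 ^ nat \<bar>n\<bar>) q (gauge_T k q) (gauge_u k n q)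
           ((1 / gauge_t k n q) *\<^sub>R matrix_inv A)"
proof -
  define b :: real where "b = 2 ^ nat \<bar>n\<bar>"
  have b1: "b \<ge> 1" by (simp add: b_def)
  note T1 = gauge_T_ge_1[OF q, of k] and Tt = gauge_T_le_gauge_t[OF q, of k n]
    and T_bound = inverse_gauge_T_le[OF q, of k] and u_ge = gauge_u_ge[OF q, of k n]
  have u0: "gauge_u k n q > 0"
    using T1 b1 u_ge by (smt (verit) b_def divide_pos_pos)
  have "1 / (gauge_u k n q * (q - 1)) \<le> 1 / (gauge_T k q / b * (q - 1))"
    using q T1 b1 u0 u_ge by (intro divide_left_mono mult_right_mono) (auto simp: b_def)
  also have "\<dots> = b * (1 / (gauge_T k q * (q - 1)))" using b1 by (simp add: field_simps)
  also have "\<dots> \<le> b * (q - 1)" using T_bound b1 by (intro mult_left_mono) auto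
  finally have u_bound: "1 / (gauge_u k n q * (q - 1)) \<le> b * (q - 1)" .
  have "norm ((1 / gauge_t k n q) *\<^sub>R matrix_inv A) = norm (matrix_inv A) / gauge_t k n q"
    using T1 Tt by simp
  also have "\<dots> \<le> (1 / (q - 1) ^ k) / gauge_T k q"
    using A T1 Tt q by (intro frac_le) auto
  also have "\<dots> = (q - 1) * (q - 1)"
    using q by (simp add: gauge_T_def power_add)
  also have "\<dots> \<le> (q - 1) * (b * (q - 1))"
    using q b1 by (intro mult_left_mono) auto
  finally have "norm ((1 / gauge_t k n q) *\<^sub>R matrix_inv A) \<le> (q - 1) * (b * (q - 1))" .
  moreover have "1 / (gauge_T k q * (q - 1)) \<le> b * (q - 1)"
    using T_bound b1 q by (simp add: order_trans[OF _ mult_right_mono[of 1 b]])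
  ultimately show ?thesis
    unfolding gauge_admissible_def b_def[symmetric] using q T1 u0 u_bound by auto
qed

lemma eventually_norm_matrix_inv_le:
  fixes A :: "real \<Rightarrow> 'm::finite cmat"
  assumes lim: "((\<lambda>q. ((q - 1) ^ k) *\<^sub>R matrix_inv (A q)) \<longlongrightarrow> 0) (at_right 1)"
  shows "\<forall>\<^sub>F q in at_right 1. norm (matrix_inv (A q)) \<le> 1 / (q - 1) ^ k"
proof -
  have "\<forall>\<^sub>F q in at_right 1. norm ((q - 1) ^ k *\<^sub>R matrix_inv (A q)) < 1"
    using tendstoD[OF lim, of 1] by (simp add: dist_norm)
  moreover have "\<forall>\<^sub>F q in at_right (1::real). 1 < q"
    by (simp add: eventually_at_right_less)
  ultimately show ?thesis
  proof eventually_elim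
    case (elim q)
    then have "(q - 1) ^ k * norm (matrix_inv (A q)) < 1" by simp
    then show ?case using elim by (simp add: field_simps)
  qed
qed

theorem lemma8p1:
  fixes A :: "real \<Rightarrow> complex^'m^'m" and k :: nat and n :: int
  assumes "\<forall>\<^sub>F q in at_right 1. invertible (A q)"
    and "k \<ge> 1"
    and "((\<lambda>q. ((q - 1) ^ k) *\<^sub>R matrix_inv (A q)) \<longlongrightarrow> 0) (at_right 1)"
  shows "\<exists>(E1 :: complex \<Rightarrow> real \<Rightarrow> complex^'m^'m) (F2 :: complex \<Rightarrow> real \<Rightarrow> complex^'m^'m).
     (\<forall>\<^sub>F q in at_right 1. GL_conv (\<lambda>z. E1 z q)) \<and> O_star F2 \<and>
     (\<forall>\<^sub>F q in at_right 1. \<exists>r>0. \<forall>z. 0 < norm z \<and> norm z < r \<and>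
        mat_analytic_on (\<lambda>w. F2 w q) {z, complex_of_real q * z} \<longrightarrow>
        sigma_q q (\<lambda>w. E1 w q ** F2 w q) z = mat (z powi n) ** A q ** (E1 z q ** F2 z q) \<and>
        mat (z powi n) ** A q ** (E1 z q ** F2 z q) = (E1 z q ** F2 z q) ** A q ** mat (z powi n))"
proof -
  define C where "C q = gauge_t k n q *\<^sub>R A q" for q
  define D where "D q = (1 / gauge_t k n q) *\<^sub>R matrix_inv (A q)" for q
  define E1 where "E1 z q = E_gauge q (gauge_T k q) (gauge_u k n q) n (C q) z" for z q
  define F2 where "F2 z q = F_gauge q (gauge_T k q) (gauge_u k n q) n (D q) z" for z q
  have "\<forall>\<^sub>F q in at_right (1::real). q \<in> {1<..<2}"
    by (rule eventually_at_right_real) simp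
  with assms(1) eventually_norm_matrix_inv_le[OF assms(3)]
  have good: "\<forall>\<^sub>F q in at_right 1. 1 < q \<and> q < 2 \<and> invertible (A q) \<and>
      gauge_admissible (2 ^ nat \<bar>n\<bar>) q (gauge_T k q) (gauge_u k n q) (D q)"
    by eventually_elim (auto simp: D_def gauge_admissible_parameters)
  have "\<forall>\<^sub>F q in at_right 1. GL_conv (\<lambda>z. E1 z q)"
    using good by eventually_elim
      (auto simp: E1_def gauge_admissible_def intro!: GL_conv_E_gauge[unfolded eta_contract_eq])
  moreover have "O_star F2"
    unfolding F2_def
    by (rule O_star_F_gauge_family) (use good in \<open>auto elim: eventually_mono\<close>)
  moreover have "\<forall>\<^sub>F q in at_right 1. \<exists>r>0. \<forall>z. 0 < norm z \<and> norm z < r \<and>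
        mat_analytic_on (\<lambda>w. F2 w q) {z, complex_of_real q * z} \<longrightarrow>
        sigma_q q (\<lambda>w. E1 w q ** F2 w q) z = mat (z powi n) ** A q ** (E1 z q ** F2 z q) \<and>
        mat (z powi n) ** A q ** (E1 z q ** F2 z q) = (E1 z q ** F2 z q) ** A q ** mat (z powi n)"
    using good
  proof eventually_elim
    case (elim q)
    then have "0 < gauge_T k q" "0 < gauge_t k n q"
      using gauge_T_ge_1[of q k] gauge_T_le_gauge_t[of q k n] by auto
    with elim show ?case
      using gauge_product_equation[of q "gauge_T k q" "gauge_t k n q" _ "A q" "gauge_u k n q" n]
      by (intro exI[of _ 1]) (auto simp: E1_def F2_def C_def D_def gauge_u_def sigma_q_def)
  qed
  ultimately show ?thesis by blast
qed

end
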